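(* The functor $T\colon\mathsf{WHB}\to\mathsf{TBA}$ is left adjoint to the functor $M\colon\mathsf{TBA}\to\mathsf{WHB}$. Moreover, $T$ preserves monomorphisms and is faithful, and $M$ is full and faithful.
   Context: A WHB-algebra is an algebra $(A,\wedge,\vee,\to,\leftarrow,0,1)$ such that $(A,\wedge,\vee,0,1)$ is a bounded distributive lattice and for all $a,b,c\in A$: $a\to a=1$; $a\to(b\wedge c)=(a\to b)\wedge(a\to c)$; $(a\vee b)\to c=(a\to c)\wedge(b\to c)$; $(a\to b)\wedge(b\to c)\le a\to c$; $a\leftarrow a=0$; $(a\vee b)\leftarrow c=(a\leftarrow c)\vee(b\leftarrow c)$; $a\leftarrow(b\wedge c)=(a\leftarrow b)\vee(a\leftarrow c)$; $a\leftarrow c\le(a\leftarrow b)\vee(b\leftarrow c)$; $a\wedge((a\to b)\leftarrow 0)\le b$; $a\le b\vee(1\to(a\leftarrow b))$. $\mathsf{WHB}$ is the category of WHB-algebras and homomorphisms. A tense algebra is $(\mathbf B,G,H)$ with $\mathbf B$ a Boolean algebra and $G,H$ unary operations such that, with $P(x)=\neg H(\neg x)$ and $F(x)=\neg G(\neg x)$, $P$ is left adjoint to $G$ and $F$ is left adjoint to $H$ (i.e. $P(x)\le y\iff x\le G(y)$ and $F(x)\le y\iff x\le H(y)$); $\mathsf{TBA}$ is the category of tense algebras and homomorphisms. $M(\mathbf B,G,H)$ is the WHB-algebra $(B,\wedge,\vee,\to,\leftarrow,0,1)$ with $x\to y=G(\neg x\vee y)$ and $x\leftarrow y=P(x\wedge\neg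 y)$, and $M$ is the identity on morphisms. For a WHB-algebra $\mathbf A$: $X(\mathbf A)$ is its set of prime filters, $\sigma_{\mathbf A}(a)=\{P\in X(\mathbf A)\colon a\in P\}$, $\tau_{\mathbf A}$ the topology with subbase $\{\sigma_{\mathbf A}(a)\}\cup\{X(\mathbf A)\setminus\sigma_{\mathbf A}(a)\}$; $(P,Q)\in R_{\mathbf A}$ iff for all $a,b$ ($a\to b\in P$, $a\in Q$ imply $b\in Q$); $(P,Q)\in S_{\mathbf A}$ iff for all $a,b$ ($a\in Q$, $b\notin Q$ imply $a\leftarrow b\in P$). $\mathcal B(\mathbf A)$ is the set of clopen subsets of $(X(\mathbf A),\tau_{\mathbf A})$ (equivalently finite unions of sets $\sigma_{\mathbf A}(a)\setminus\sigma_{\mathbf A}(b)$). $T(\mathbf A)=(\mathcal B(\mathbf A),\cup,\cap,{}^c,G_{\mathbf A},H_{\mathbf A},\emptyset,X(\mathbf A))$ with $G_{\mathbf A}(U)=\{P\colon R_{\mathbf A}(P)\subseteq U\}$ and $H_{\mathbf A}(U)=\{P\colon S_{\mathbf A}(P)\subseteq U\}$, where $\mathcal R(P)=\{Q\colon (P,Q)\in\mathcal R\}$. For a homomorphism $h\colon\mathbf A\to\mathbf B$, $T(h)(U)=\{Q\in X(\mathbf B)\colon h^{-1}(Q)\in U\}$, so that $T(h)(\sigma_{\mathbf A}(a)\setminus\sigma_{\mathbf A}(b))=\sigma_{\mathbf B}(h(a))\setminus\sigma_{\mathbf B}(h(b))$. *)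

theory Defs
  imports "HOL-Analysis.Analysis"
begin

record 'a whb =
  wcar :: "'a set"
  wmeet :: "'a \<Rightarrow> 'a \<Rightarrow> 'a"
  wjoin :: "'a \<Rightarrow> 'a \<Rightarrow> 'a"
  wimp :: "'a \<Rightarrow> 'a \<Rightarrow> 'a"
  wcoimp :: "'a \<Rightarrow> 'a \<Rightarrow> 'a"
  wbot :: 'a
  wtop :: 'a

record 'b tba =
  tcar :: "'b set"
  tmeet :: "'b \<Rightarrow> 'b \<Rightarrow> 'b"
  tjoin :: "'b \<Rightarrow> 'b \<Rightarrow> 'b"
  tneg :: "'b \<Rightarrow> 'b"
  tG :: "'b \<Rightarrow> 'b"
  tH :: "'b \<Rightarrow> 'b"
  tbot :: 'b
  ttop :: 'b

definition bdl :: "'a set \<Rightarrow> ('a \<Rightarrow> 'a \<Rightarrow> 'a) \<Rightarrow> ('a \<Rightarrow> 'a \<Rightarrow> 'a) \<Rightarrow> 'a \<Rightarrow> 'a \<Rightarrow> bool" where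
  "bdl C m j b t \<longleftrightarrow> b \<in> C \<and> t \<in> C \<and>
    (\<forall>x\<in>C. \<forall>y\<in>C. m x y \<in> C \<and> j x y \<in> C \<and> m x y = m y x \<and> j x y = j y x
       \<and> m x (j x y) = x \<and> j x (m x y) = x) \<and>
    (\<forall>x\<in>C. \<forall>y\<in>C. \<forall>z\<in>C. m x (m y z) = m (m x y) z \<and> j x (j y z) = j (j x y) z
       \<and> m x (j y z) = j (m x y) (m x z)) \<and>
    (\<forall>x\<in>C. j b x = x \<and> m t x = x)"

definition wle :: "('a, 'm) whb_scheme \<Rightarrow> 'a \<Rightarrow> 'a \<Rightarrow> bool" where
  "wle A x y \<longleftrightarrow> wmeet A x y = x"

definition whb_algebra :: "('a, 'm) whb_scheme \<Rightarrow> bool" where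
  "whb_algebra A \<longleftrightarrow> bdl (wcar A) (wmeet A) (wjoin A) (wbot A) (wtop A) \<and>
   (\<forall>a\<in>wcar A. \<forall>b\<in>wcar A. wimp A a b \<in> wcar A \<and> wcoimp A a b \<in> wcar A) \<and>
   (\<forall>a\<in>wcar A. \<forall>b\<in>wcar A. \<forall>c\<in>wcar A.
      wimp A a a = wtop A \<and>
      wimp A a (wmeet A b c) = wmeet A (wimp A a b) (wimp A a c) \<and>
      wimp A (wjoin A a b) c = wmeet A (wimp A a c) (wimp A b c) \<and>
      wle A (wmeet A (wimp A a b) (wimp A b c)) (wimp A a c) \<and>
      wcoimp A a a = wbot A \<and>
      wcoimp A (wjoin A a b) c = wjoin A (wcoimp A a c) (wcoimp A b c) \<and>
      wcoimp A a (wmeet A b c) = wjoin A (wcoimp A a b) (wcoimp A a c) \<and>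
      wle A (wcoimp A a c) (wjoin A (wcoimp A a b) (wcoimp A b c)) \<and>
      wle A (wmeet A a (wcoimp A (wimp A a b) (wbot A))) b \<and>
      wle A a (wjoin A b (wimp A (wtop A) (wcoimp A a b))))"

definition tle :: "('b, 'm) tba_scheme \<Rightarrow> 'b \<Rightarrow> 'b \<Rightarrow> bool" where
  "tle B x y \<longleftrightarrow> tmeet B x y = x"

definition tP :: "('b, 'm) tba_scheme \<Rightarrow> 'b \<Rightarrow> 'b" where
  "tP B x = tneg B (tH B (tneg B x))"

definition tF :: "('b, 'm) tba_scheme \<Rightarrow> 'b \<Rightarrow> 'b" where
  "tF B x = tneg B (tG B (tneg B x))"

definition boolean_algebra_on :: "('b, 'm) tba_scheme \<Rightarrow> bool" where
  "boolean_algebra_on B \<longleftrightarrow> bdl (tcar B) (tmeet B) (tjoin B) (tbot B) (ttop B) \<and>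
   (\<forall>x\<in>tcar B. tneg B x \<in> tcar B \<and> tmeet B x (tneg B x) = tbot B \<and> tjoin B x (tneg B x) = ttop B)"

definition tense_algebra :: "('b, 'm) tba_scheme \<Rightarrow> bool" where
  "tense_algebra B \<longleftrightarrow> boolean_algebra_on B \<and>
   (\<forall>x\<in>tcar B. tG B x \<in> tcar B \<and> tH B x \<in> tcar B) \<and>
   (\<forall>x\<in>tcar B. \<forall>y\<in>tcar B. (tle B (tP B x) y \<longleftrightarrow> tle B x (tG B y)) \<and>
                               (tle B (tF B x) y \<longleftrightarrow> tle B x (tH B y)))"

text \<open>Homomorphisms (only their values on the carrier matter).\<close>
definition whb_hom :: "('a, 'm) whb_scheme \<Rightarrow> ('c, 'n) whb_scheme \<Rightarrow> ('a \<Rightarrow> 'c) \<Rightarrow> bool" where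
  "whb_hom A A' h \<longleftrightarrow> (\<forall>a\<in>wcar A. h a \<in> wcar A') \<and>
   (\<forall>a\<in>wcar A. \<forall>b\<in>wcar A.
      h (wmeet A a b) = wmeet A' (h a) (h b) \<and> h (wjoin A a b) = wjoin A' (h a) (h b) \<and>
      h (wimp A a b) = wimp A' (h a) (h b) \<and> h (wcoimp A a b) = wcoimp A' (h a) (h b)) \<and>
   h (wbot A) = wbot A' \<and> h (wtop A) = wtop A'"

definition tba_hom :: "('b, 'm) tba_scheme \<Rightarrow> ('d, 'n) tba_scheme \<Rightarrow> ('b \<Rightarrow> 'd) \<Rightarrow> bool" where
  "tba_hom B B' g \<longleftrightarrow> (\<forall>x\<in>tcar B. g x \<in> tcar B') \<and>
   (\<forall>x\<in>tcar B. \<forall>y\<in>tcar B.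
      g (tmeet B x y) = tmeet B' (g x) (g y) \<and> g (tjoin B x y) = tjoin B' (g x) (g y)) \<and>
   (\<forall>x\<in>tcar B. g (tneg B x) = tneg B' (g x) \<and> g (tG B x) = tG B' (g x) \<and> g (tH B x) = tH B' (g x)) \<and>
   g (tbot B) = tbot B' \<and> g (ttop B) = ttop B'"

definition Mfun :: "('b, 'm) tba_scheme \<Rightarrow> 'b whb" where
  "Mfun B = \<lparr> wcar = tcar B, wmeet = tmeet B, wjoin = tjoin B,
     wimp = (\<lambda>x y. tG B (tjoin B (tneg B x) y)),
     wcoimp = (\<lambda>x y. tP B (tmeet B x (tneg B y))),
     wbot = tbot B, wtop = ttop B \<rparr>"

text \<open>On morphisms M is the identity.\<close>

definition prime_filter :: "('a, 'm) whb_scheme \<Rightarrow> 'a set \<Rightarrow> bool" where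
  "prime_filter A P \<longleftrightarrow> P \<subseteq> wcar A \<and> wtop A \<in> P \<and> wbot A \<notin> P \<and>
    (\<forall>a\<in>P. \<forall>b\<in>P. wmeet A a b \<in> P) \<and>
    (\<forall>a\<in>P. \<forall>b\<in>wcar A. wle A a b \<longrightarrow> b \<in> P) \<and>
    (\<forall>a\<in>wcar A. \<forall>b\<in>wcar A. wjoin A a b \<in> P \<longrightarrow> a \<in> P \<or> b \<in> P)"

definition Xsp :: "('a, 'm) whb_scheme \<Rightarrow> 'a set set" where
  "Xsp A = {P. prime_filter A P}"

definition sigma :: "('a, 'm) whb_scheme \<Rightarrow> 'a \<Rightarrow> 'a set set" where
  "sigma A a = {P \<in> Xsp A. a \<in> P}"

definition tau :: "('a, 'm) whb_scheme \<Rightarrow> 'a set topology" where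
  "tau A = topology_generated_by
     ((sigma A ` wcar A) \<union> ((\<lambda>a. Xsp A - sigma A a) ` wcar A))"

definition clopens :: "('a, 'm) whb_scheme \<Rightarrow> 'a set set set" where
  "clopens A = {U. openin (tau A) U \<and> closedin (tau A) U}"

definition Rrel :: "('a, 'm) whb_scheme \<Rightarrow> ('a set \<times> 'a set) set" where
  "Rrel A = {(P, Q). P \<in> Xsp A \<and> Q \<in> Xsp A \<and>
     (\<forall>a\<in>wcar A. \<forall>b\<in>wcar A. wimp A a b \<in> P \<longrightarrow> a \<in> Q \<longrightarrow> b \<in> Q)}"

definition Srel :: "('a, 'm) whb_scheme \<Rightarrow> ('a set \<times> 'a set) set" where
  "Srel A = {(P, Q). P \<in> Xsp A \<and> Q \<in> Xsp A \<and>
     (\<forall>a\<in>wcar A. \<forall>b\<in>wcar A. a \<in> Q \<longrightarrow> b \<notin> Q \<longrightarrow> wcoimp A a b \<in> P)}"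

definition GA :: "('a, 'm) whb_scheme \<Rightarrow> 'a set set \<Rightarrow> 'a set set" where
  "GA A U = {P \<in> Xsp A. Rrel A `` {P} \<subseteq> U}"

definition HA :: "('a, 'm) whb_scheme \<Rightarrow> 'a set set \<Rightarrow> 'a set set" where
  "HA A U = {P \<in> Xsp A. Srel A `` {P} \<subseteq> U}"

definition Tfun :: "('a, 'm) whb_scheme \<Rightarrow> 'a set set tba" where
  "Tfun A = \<lparr> tcar = clopens A, tmeet = (\<inter>), tjoin = (\<union>),
     tneg = (\<lambda>U. Xsp A - U), tG = GA A, tH = HA A,
     tbot = {}, ttop = Xsp A \<rparr>"

definition Tmor :: "('a, 'm) whb_scheme \<Rightarrow> ('c, 'n) whb_scheme \<Rightarrow> ('a \<Rightarrow> 'c)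
                     \<Rightarrow> 'a set set \<Rightarrow> 'c set set" where
  "Tmor A A' h U = {Q \<in> Xsp A'. {a \<in> wcar A. h a \<in> Q} \<in> U}"

end

theory Submission
  imports Defs
begin

text \<open>
  The proof rests on a relational prime filter theorem: if \<open>\<rho>\<close> is a preorder on a bounded
  distributive lattice that contains the order and is compatible with meets and joins, then a
  meet-closed set none of whose elements is \<open>\<rho>\<close>-below an element of a join-closed set is separated
  from it by a \<open>\<rho>\<close>-closed prime filter. With \<open>\<rho>\<close> the order this gives the representation \<open>\<sigma>\<close>
  and, via Alexander's subbase theorem, compactness of the spectrum, so that the clopen sets are
  the finite unions of sets \<open>\<sigma> a - \<sigma> b\<close>. With \<open>\<rho> x y \<longleftrightarrow> x \<rightarrow> y \<in> P\<close>, resp. \<open>x \<leftarrow> y \<notin> P\<close>, it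
  yields the \<open>R\<close>- and \<open>S\<close>-successors of \<open>P\<close> needed for \<open>\<sigma>\<close> to preserve \<open>\<rightarrow>\<close> and \<open>\<leftarrow>\<close>; the last two
  WHB axioms make \<open>S\<close> the converse of \<open>R\<close>, so the clopen sets form a tense algebra.

  A homomorphism \<open>f : A \<rightarrow> M(B)\<close> extends to the clopen sets by sending \<open>U\<close> to the unique element
  of \<open>B\<close> lying in exactly those prime filters \<open>Q\<close> of \<open>B\<close> whose pullback \<open>f\<inverse>(Q)\<close> lies in \<open>U\<close>.
\<close>

locale dlattice =
  fixes C :: "'a set" and m j :: "'a \<Rightarrow> 'a \<Rightarrow> 'a" and b t :: 'a
  assumes bdl: "bdl C m j b t"
begin

lemma bot_closed [simp]: "b \<in> C" and top_closed [simp]: "t \<in> C"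
  using bdl unfolding bdl_def by blast+

lemma meet_closed [simp]: "x \<in> C \<Longrightarrow> y \<in> C \<Longrightarrow> m x y \<in> C"
  and join_closed [simp]: "x \<in> C \<Longrightarrow> y \<in> C \<Longrightarrow> j x y \<in> C"
  and meet_comm: "x \<in> C \<Longrightarrow> y \<in> C \<Longrightarrow> m x y = m y x"
  and join_comm: "x \<in> C \<Longrightarrow> y \<in> C \<Longrightarrow> j x y = j y x"
  and meet_join_absorb: "x \<in> C \<Longrightarrow> y \<in> C \<Longrightarrow> m x (j x y) = x"
  and join_meet_absorb: "x \<in> C \<Longrightarrow> y \<in> C \<Longrightarrow> j x (m x y) = x"
  using bdl unfolding bdl_def by blast+

lemma meet_assoc: "x \<in> C \<Longrightarrow> y \<in> C \<Longrightarrow> z \<in> C \<Longrightarrow> m (m x y) z = m x (m y z)"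
  and join_assoc: "x \<in> C \<Longrightarrow> y \<in> C \<Longrightarrow> z \<in> C \<Longrightarrow> j (j x y) z = j x (j y z)"
  and meet_join_distrib: "x \<in> C \<Longrightarrow> y \<in> C \<Longrightarrow> z \<in> C \<Longrightarrow> m x (j y z) = j (m x y) (m x z)"
  using bdl unfolding bdl_def by metis+

lemma join_bot [simp]: "x \<in> C \<Longrightarrow> j b x = x" and meet_top [simp]: "x \<in> C \<Longrightarrow> m t x = x"
  using bdl unfolding bdl_def by blast+

lemma join_bot_right [simp]: "x \<in> C \<Longrightarrow> j x b = x"
  by (metis join_bot join_comm bot_closed)

lemma meet_top_right [simp]: "x \<in> C \<Longrightarrow> m x t = x"
  by (metis meet_top meet_comm top_closed)

lemma meet_idem [simp]: "x \<in> C \<Longrightarrow> m x x = x"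
  by (metis join_meet_absorb meet_join_absorb meet_closed)

lemma join_idem [simp]: "x \<in> C \<Longrightarrow> j x x = x"
  by (metis join_meet_absorb meet_join_absorb join_closed)

definition le :: "'a \<Rightarrow> 'a \<Rightarrow> bool" where
  "le x y \<longleftrightarrow> m x y = x"

lemma le_iff_join: "x \<in> C \<Longrightarrow> y \<in> C \<Longrightarrow> le x y \<longleftrightarrow> j x y = y"
  unfolding le_def by (metis join_comm join_meet_absorb meet_comm meet_join_absorb)

lemma le_refl [simp]: "x \<in> C \<Longrightarrow> le x x"
  by (simp add: le_def)

lemma le_trans: "x \<in> C \<Longrightarrow> y \<in> C \<Longrightarrow> z \<in> C \<Longrightarrow> le x y \<Longrightarrow> le y z \<Longrightarrow> le x z"
  unfolding le_def by (metis meet_assoc)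

lemma le_antisym: "x \<in> C \<Longrightarrow> y \<in> C \<Longrightarrow> le x y \<Longrightarrow> le y x \<Longrightarrow> x = y"
  unfolding le_def by (metis meet_comm)

lemma meet_le1 [simp]: "x \<in> C \<Longrightarrow> y \<in> C \<Longrightarrow> le (m x y) x"
  unfolding le_def by (metis meet_assoc meet_comm meet_idem)

lemma meet_le2 [simp]: "x \<in> C \<Longrightarrow> y \<in> C \<Longrightarrow> le (m x y) y"
  unfolding le_def by (metis meet_assoc meet_idem)

lemma join_ge1 [simp]: "x \<in> C \<Longrightarrow> y \<in> C \<Longrightarrow> le x (j x y)"
  unfolding le_def by (simp add: meet_join_absorb)

lemma join_ge2 [simp]: "x \<in> C \<Longrightarrow> y \<in> C \<Longrightarrow> le y (j x y)"
  unfolding le_def by (metis meet_join_absorb join_comm)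

lemma meet_greatest: "x \<in> C \<Longrightarrow> y \<in> C \<Longrightarrow> z \<in> C \<Longrightarrow> le z x \<Longrightarrow> le z y \<Longrightarrow> le z (m x y)"
  unfolding le_def by (metis meet_assoc)

lemma join_least: "x \<in> C \<Longrightarrow> y \<in> C \<Longrightarrow> z \<in> C \<Longrightarrow> le x z \<Longrightarrow> le y z \<Longrightarrow> le (j x y) z"
  by (simp add: le_iff_join join_assoc)

lemma bot_le [simp]: "x \<in> C \<Longrightarrow> le b x"
  by (simp add: le_iff_join)

lemma le_top [simp]: "x \<in> C \<Longrightarrow> le x t"
  by (simp add: le_def meet_comm)

lemma meet_mono:
  "x \<in> C \<Longrightarrow> y \<in> C \<Longrightarrow> x' \<in> C \<Longrightarrow> y' \<in> C \<Longrightarrow> le x x' \<Longrightarrow> le y y' \<Longrightarrow> le (m x y) (m x' y')"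
  by (meson meet_le1 meet_le2 meet_greatest le_trans meet_closed)

lemma join_mono:
  "x \<in> C \<Longrightarrow> y \<in> C \<Longrightarrow> x' \<in> C \<Longrightarrow> y' \<in> C \<Longrightarrow> le x x' \<Longrightarrow> le y y' \<Longrightarrow> le (j x y) (j x' y')"
  by (meson join_ge1 join_ge2 join_least le_trans join_closed)

lemma meets_closed [simp]: "set xs \<subseteq> C \<Longrightarrow> foldr m xs t \<in> C"
  by (induction xs) auto

lemma joins_closed [simp]: "set xs \<subseteq> C \<Longrightarrow> foldr j xs b \<in> C"
  by (induction xs) auto

lemma meets_append:
  "set xs \<subseteq> C \<Longrightarrow> set ys \<subseteq> C \<Longrightarrow> foldr m (xs @ ys) t = m (foldr m xs t) (foldr m ys t)"
  by (induction xs) (auto simp: meet_assoc)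

lemma joins_append:
  "set xs \<subseteq> C \<Longrightarrow> set ys \<subseteq> C \<Longrightarrow> foldr j (xs @ ys) b = j (foldr j xs b) (foldr j ys b)"
  by (induction xs) (auto simp: join_assoc)

definition pf :: "'a set \<Rightarrow> bool" where
  "pf P \<longleftrightarrow> P \<subseteq> C \<and> t \<in> P \<and> b \<notin> P \<and> (\<forall>x\<in>P. \<forall>y\<in>P. m x y \<in> P) \<and>
    (\<forall>x\<in>P. \<forall>y\<in>C. le x y \<longrightarrow> y \<in> P) \<and> (\<forall>x\<in>C. \<forall>y\<in>C. j x y \<in> P \<longrightarrow> x \<in> P \<or> y \<in> P)"

lemma pf_subset: "pf P \<Longrightarrow> P \<subseteq> C"
  and pf_top [simp]: "pf P \<Longrightarrow> t \<in> P"
  and pf_bot [simp]: "pf P \<Longrightarrow> b \<notin> P"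
  and pf_up: "pf P \<Longrightarrow> x \<in> P \<Longrightarrow> y \<in> C \<Longrightarrow> le x y \<Longrightarrow> y \<in> P"
  unfolding pf_def by blast+

lemma pf_meet_iff [simp]: "pf P \<Longrightarrow> x \<in> C \<Longrightarrow> y \<in> C \<Longrightarrow> m x y \<in> P \<longleftrightarrow> x \<in> P \<and> y \<in> P"
  unfolding pf_def by (meson meet_le1 meet_le2 meet_closed)

lemma pf_join_iff [simp]: "pf P \<Longrightarrow> x \<in> C \<Longrightarrow> y \<in> C \<Longrightarrow> j x y \<in> P \<longleftrightarrow> x \<in> P \<or> y \<in> P"
  unfolding pf_def by (meson join_ge1 join_ge2 join_closed subsetD)

lemma pf_meets_iff: "pf P \<Longrightarrow> set xs \<subseteq> C \<Longrightarrow> foldr m xs t \<in> P \<longleftrightarrow> set xs \<subseteq> P"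
  by (induction xs) auto

lemma pf_joins_iff: "pf P \<Longrightarrow> set xs \<subseteq> C \<Longrightarrow> foldr j xs b \<in> P \<longleftrightarrow> (\<exists>x\<in>set xs. x \<in> P)"
  by (induction xs) auto

section \<open>The prime filter theorem\<close>

definition lattice_preorder :: "('a \<Rightarrow> 'a \<Rightarrow> bool) \<Rightarrow> bool" where
  "lattice_preorder \<rho> \<longleftrightarrow>
     (\<forall>x\<in>C. \<forall>y\<in>C. le x y \<longrightarrow> \<rho> x y) \<and>
     (\<forall>x\<in>C. \<forall>y\<in>C. \<forall>z\<in>C. \<rho> x y \<longrightarrow> \<rho> y z \<longrightarrow> \<rho> x z) \<and>
     (\<forall>x\<in>C. \<forall>y\<in>C. \<forall>z\<in>C. \<rho> x y \<longrightarrow> \<rho> x z \<longrightarrow> \<rho> x (m y z)) \<and>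
     (\<forall>x\<in>C. \<forall>y\<in>C. \<forall>z\<in>C. \<rho> x z \<longrightarrow> \<rho> y z \<longrightarrow> \<rho> (j x y) z)"

lemma lattice_preorderD:
  assumes "lattice_preorder \<rho>" and "x \<in> C" "y \<in> C" "z \<in> C"
  shows "le x y \<Longrightarrow> \<rho> x y"
    and "\<rho> x y \<Longrightarrow> \<rho> y z \<Longrightarrow> \<rho> x z"
    and "\<rho> x y \<Longrightarrow> \<rho> x z \<Longrightarrow> \<rho> x (m y z)"
    and "\<rho> x z \<Longrightarrow> \<rho> y z \<Longrightarrow> \<rho> (j x y) z"
  using assms unfolding lattice_preorder_def by blast+

lemma lattice_preorder_le: "lattice_preorder le"
  unfolding lattice_preorder_def by (blast intro: le_trans meet_greatest join_least)

lemma lattice_preorder_upset: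
  assumes \<rho>: "lattice_preorder \<rho>" and S: "S \<subseteq> C" "\<forall>p\<in>S. \<forall>q\<in>S. m p q \<in> S" and x: "x \<in> C"
  defines "U \<equiv> {z \<in> C. \<exists>q\<in>S. \<rho> (m q x) z}"
  shows "U \<subseteq> C" and "\<forall>p\<in>U. \<forall>q\<in>U. m p q \<in> U" and "\<forall>p\<in>U. \<forall>z\<in>C. \<rho> p z \<longrightarrow> z \<in> U"
    and "S \<subseteq> U"
proof -
  show "U \<subseteq> C" unfolding U_def by blast
  show "\<forall>p\<in>U. \<forall>q\<in>U. m p q \<in> U"
  proof (intro ballI)
    fix p q assume "p \<in> U" "q \<in> U"
    then obtain s s' where s: "s \<in> S" "s' \<in> S" "\<rho> (m s x) p" "\<rho> (m s' x) q" and pq: "p \<in> C" "q \<in> C"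
      unfolding U_def by blast
    have C: "s \<in> C" "s' \<in> C" using s S by auto
    let ?r = "m (m s s') x"
    have "\<rho> ?r (m s x)" "\<rho> ?r (m s' x)"
      using C x by (auto intro!: lattice_preorderD(1)[OF \<rho>] meet_mono)
    then have "\<rho> ?r p" "\<rho> ?r q"
      using s C x pq by (auto intro: lattice_preorderD(2)[OF \<rho>, of ?r "m s x"] lattice_preorderD(2)[OF \<rho>, of ?r "m s' x"])
    then have "\<rho> ?r (m p q)" using C x pq by (intro lattice_preorderD(3)[OF \<rho>]) auto
    moreover have "m s s' \<in> S" using s S by blast
    moreover have "m p q \<in> C" using pq by simp
    ultimately show "m p q \<in> U" unfolding U_def by blast
  qed
  show "\<forall>p\<in>U. \<forall>z\<in>C. \<rho> p z \<longrightarrow> z \<in> U"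
  proof (intro ballI impI)
    fix p z assume "p \<in> U" and z: "z \<in> C" "\<rho> p z"
    then obtain q where q: "q \<in> S" "\<rho> (m q x) p" "p \<in> C" unfolding U_def by blast
    have "\<rho> (m q x) z"
      by (rule lattice_preorderD(2)[OF \<rho>, of _ p]) (use q z S x in auto)
    then show "z \<in> U" unfolding U_def using q z by blast
  qed
  show "S \<subseteq> U"
    unfolding U_def using S x by (auto intro!: bexI lattice_preorderD(1)[OF \<rho>])
qed

lemma lattice_preorder_meet_join:
  assumes \<rho>: "lattice_preorder \<rho>" and C: "q \<in> C" "q' \<in> C" "x \<in> C" "y \<in> C" "i \<in> C" "i' \<in> C"
    and "\<rho> (m q x) i" "\<rho> (m q' y) i'"
  shows "\<rho> (m (m q q') (j x y)) (j i i')"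
proof -
  note \<rho>_le = lattice_preorderD(1) [OF \<rho>] and \<rho>_trans = lattice_preorderD(2) [OF \<rho>]
  let ?r = "m q q'" and ?i = "j i i'"
  have "\<rho> (m ?r x) i"
    by (rule \<rho>_trans [of _ "m q x"]) (use assms in \<open>auto intro!: \<rho>_le meet_mono\<close>)
  then have x_i: "\<rho> (m ?r x) ?i"
    by (rule \<rho>_trans [rotated 3]) (use C in \<open>auto intro!: \<rho>_le\<close>)
  have "\<rho> (m ?r y) i'"
    by (rule \<rho>_trans [of _ "m q' y"]) (use assms in \<open>auto intro!: \<rho>_le meet_mono\<close>)
  then have y_i: "\<rho> (m ?r y) ?i"
    by (rule \<rho>_trans [rotated 3]) (use C in \<open>auto intro!: \<rho>_le\<close>)
  have "\<rho> (j (m ?r x) (m ?r y)) ?i"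
    using x_i y_i C by (intro lattice_preorderD(4) [OF \<rho>]) auto
  then show ?thesis
    using C by (simp add: meet_join_distrib)
qed

definition rho_filter_avoiding :: "('a \<Rightarrow> 'a \<Rightarrow> bool) \<Rightarrow> 'a set \<Rightarrow> 'a set \<Rightarrow> bool" where
  "rho_filter_avoiding \<rho> I Q \<longleftrightarrow> Q \<subseteq> C \<and> (\<forall>x\<in>Q. \<forall>y\<in>Q. m x y \<in> Q) \<and>
     (\<forall>x\<in>Q. \<forall>y\<in>C. \<rho> x y \<longrightarrow> y \<in> Q) \<and> Q \<inter> I = {}"

lemma maximal_rho_filter_avoiding:
  assumes \<rho>: "lattice_preorder \<rho>" and F: "F \<subseteq> C" "\<forall>x\<in>F. \<forall>y\<in>F. m x y \<in> F"
    and FI: "\<forall>x\<in>F. \<forall>y\<in>I. \<not> \<rho> x y"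
  obtains M where "rho_filter_avoiding \<rho> I M" "F \<subseteq> M"
    "\<And>X. rho_filter_avoiding \<rho> I X \<Longrightarrow> M \<subseteq> X \<Longrightarrow> X = M"
proof -
  define Fam where "Fam = {Q. rho_filter_avoiding \<rho> I Q \<and> F \<subseteq> Q}"
  have "{z \<in> C. \<exists>q\<in>F. \<rho> (m q t) z} = {z \<in> C. \<exists>q\<in>F. \<rho> q z}"
    using F(1) by force
  moreover note lattice_preorder_upset [OF \<rho> F top_closed]
  ultimately have "{z \<in> C. \<exists>q\<in>F. \<rho> q z} \<in> Fam"
    unfolding Fam_def rho_filter_avoiding_def using FI by auto
  then have "Fam \<noteq> {}" by blast
  moreover have "\<Union>Ch \<in> Fam" if "Ch \<noteq> {}" "subset.chain Fam Ch" for Ch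
  proof -
    have sub: "Ch \<subseteq> Fam" and lin: "\<And>X Y. X \<in> Ch \<Longrightarrow> Y \<in> Ch \<Longrightarrow> X \<subseteq> Y \<or> Y \<subseteq> X"
      using that(2) unfolding subset.chain_def by auto
    have "m x y \<in> \<Union>Ch" if xy: "x \<in> \<Union>Ch" "y \<in> \<Union>Ch" for x y
    proof -
      obtain X Y where "X \<in> Ch" "Y \<in> Ch" "x \<in> X" "y \<in> Y" using xy by blast
      then obtain Z where "Z \<in> Ch" "x \<in> Z" "y \<in> Z" using lin by blast
      then show ?thesis using sub unfolding Fam_def rho_filter_avoiding_def by blast
    qed
    moreover have mem: "X \<subseteq> C \<and> (\<forall>x\<in>X. \<forall>y\<in>C. \<rho> x y \<longrightarrow> y \<in> X) \<and> F \<subseteq> X \<and> X \<inter> I = {}"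
      if "X \<in> Ch" for X
      using sub that unfolding Fam_def rho_filter_avoiding_def by blast
    moreover have "F \<subseteq> \<Union>Ch" using mem \<open>Ch \<noteq> {}\<close> by blast
    ultimately show ?thesis
      unfolding Fam_def rho_filter_avoiding_def mem_Collect_eq by (intro conjI; blast)
  qed
  ultimately obtain M where "M \<in> Fam" "\<And>X. X \<in> Fam \<Longrightarrow> M \<subseteq> X \<Longrightarrow> X = M"
    using subset_Zorn_nonempty [of Fam] by blast
  then show ?thesis
    using that unfolding Fam_def by blast
qed

lemma maximal_rho_filter_avoiding_escape:
  assumes \<rho>: "lattice_preorder \<rho>" and M: "rho_filter_avoiding \<rho> I M" "t \<in> M"
    and M_max: "\<And>X. rho_filter_avoiding \<rho> I X \<Longrightarrow> M \<subseteq> X \<Longrightarrow> X = M"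
    and x: "x \<in> C" "x \<notin> M"
  shows "\<exists>q\<in>M. \<exists>i\<in>I. \<rho> (m q x) i"
proof (rule ccontr)
  define U where "U = {z \<in> C. \<exists>q\<in>M. \<rho> (m q x) z}"
  have "M \<subseteq> C" "\<forall>p\<in>M. \<forall>q\<in>M. m p q \<in> M"
    using M(1) unfolding rho_filter_avoiding_def by auto
  note U = lattice_preorder_upset [OF \<rho> this x(1), folded U_def]
  assume "\<not> ?thesis"
  then have "U \<inter> I = {}" unfolding U_def by blast
  then have "rho_filter_avoiding \<rho> I U"
    unfolding rho_filter_avoiding_def using U(1-3) by blast
  then have "U = M" using M_max U(4) by blast
  moreover have "x \<in> U"
    unfolding U_def using M(2) x by (auto intro!: bexI [of _ t] lattice_preorderD(1) [OF \<rho>])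
  ultimately show False using x by blast
qed

lemma maximal_rho_filter_avoiding_prime:
  assumes \<rho>: "lattice_preorder \<rho>" and M: "rho_filter_avoiding \<rho> I M" "M \<noteq> {}"
    and M_max: "\<And>X. rho_filter_avoiding \<rho> I X \<Longrightarrow> M \<subseteq> X \<Longrightarrow> X = M"
    and I: "I \<subseteq> C" "I \<noteq> {}" "\<forall>x\<in>I. \<forall>y\<in>I. j x y \<in> I"
  shows "pf M"
proof -
  note \<rho>_le = lattice_preorderD(1) [OF \<rho>]
  have MC: "M \<subseteq> C" and M_meet: "\<forall>x\<in>M. \<forall>y\<in>M. m x y \<in> M"
    and M_up: "\<forall>x\<in>M. \<forall>y\<in>C. \<rho> x y \<longrightarrow> y \<in> M" and MI: "M \<inter> I = {}"
    using M(1) unfolding rho_filter_avoiding_def by auto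
  obtain q i where q: "q \<in> M" and i: "i \<in> I" using M(2) I(2) by blast
  then have qi: "q \<in> C" "i \<in> C" using MC I(1) by auto
  then have "\<rho> q t" "\<rho> b i" by (auto intro!: \<rho>_le)
  then have tM: "t \<in> M" and bM: "b \<notin> M" using q i qi M_up MI by auto
  have "x \<in> M \<or> y \<in> M" if xy: "x \<in> C" "y \<in> C" "j x y \<in> M" for x y
  proof (rule ccontr)
    assume "\<not> (x \<in> M \<or> y \<in> M)"
    then obtain q i q' i' where qi: "q \<in> M" "i \<in> I" "\<rho> (m q x) i" "q' \<in> M" "i' \<in> I" "\<rho> (m q' y) i'"
      using maximal_rho_filter_avoiding_escape [OF \<rho> M(1) tM M_max] xy by meson
    have C: "q \<in> C" "q' \<in> C" "i \<in> C" "i' \<in> C" using qi MC I(1) by auto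
    let ?r = "m q q'" and ?i = "j i i'"
    have "\<rho> (m ?r (j x y)) ?i"
      by (rule lattice_preorder_meet_join [OF \<rho>]) (use C xy qi in auto)
    moreover have "m ?r (j x y) \<in> M" using M_meet qi xy by blast
    ultimately have "?i \<in> M" using M_up C by simp
    moreover have "?i \<in> I" using I(3) qi by blast
    ultimately show False using MI by blast
  qed
  moreover have "\<forall>x\<in>M. \<forall>y\<in>C. le x y \<longrightarrow> y \<in> M"
    using M_up \<rho>_le MC by blast
  ultimately show "pf M"
    unfolding pf_def using MC tM bM M_meet by blast
qed

theorem prime_filter_separation:
  assumes \<rho>: "lattice_preorder \<rho>"
    and F: "F \<subseteq> C" "F \<noteq> {}" "\<forall>x\<in>F. \<forall>y\<in>F. m x y \<in> F"
    and I: "I \<subseteq> C" "I \<noteq> {}" "\<forall>x\<in>I. \<forall>y\<in>I. j x y \<in> I"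
    and FI: "\<forall>x\<in>F. \<forall>y\<in>I. \<not> \<rho> x y"
  shows "\<exists>Q. pf Q \<and> F \<subseteq> Q \<and> Q \<inter> I = {} \<and> (\<forall>x\<in>Q. \<forall>y\<in>C. \<rho> x y \<longrightarrow> y \<in> Q)"
proof -
  obtain M where M: "rho_filter_avoiding \<rho> I M" "F \<subseteq> M"
    and M_max: "\<And>X. rho_filter_avoiding \<rho> I X \<Longrightarrow> M \<subseteq> X \<Longrightarrow> X = M"
    using maximal_rho_filter_avoiding [OF \<rho> F(1,3) FI] by blast
  moreover have "pf M"
    using maximal_rho_filter_avoiding_prime [OF \<rho> M(1) _ M_max I] M(2) F(2) by blast
  ultimately show ?thesis
    unfolding rho_filter_avoiding_def by blast
qed

corollary prime_filter_rel:
  assumes "lattice_preorder \<rho>" "a \<in> C" "c \<in> C" "\<not> \<rho> a c"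
  shows "\<exists>Q. pf Q \<and> a \<in> Q \<and> c \<notin> Q \<and> (\<forall>x\<in>Q. \<forall>y\<in>C. \<rho> x y \<longrightarrow> y \<in> Q)"
proof -
  have "\<exists>Q. pf Q \<and> {a} \<subseteq> Q \<and> Q \<inter> {c} = {} \<and> (\<forall>x\<in>Q. \<forall>y\<in>C. \<rho> x y \<longrightarrow> y \<in> Q)"
    using assms by (intro prime_filter_separation) simp_all
  then show ?thesis by blast
qed

corollary prime_filter_exists:
  "a \<in> C \<Longrightarrow> c \<in> C \<Longrightarrow> \<not> le a c \<Longrightarrow> \<exists>Q. pf Q \<and> a \<in> Q \<and> c \<notin> Q"
  using prime_filter_rel[OF lattice_preorder_le] by blast

lemma le_iff_prime_filters: "x \<in> C \<Longrightarrow> y \<in> C \<Longrightarrow> le x y \<longleftrightarrow> (\<forall>Q. pf Q \<longrightarrow> x \<in> Q \<longrightarrow> y \<in> Q)"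
  using prime_filter_exists pf_up by blast

lemma eq_iff_prime_filters: "x \<in> C \<Longrightarrow> y \<in> C \<Longrightarrow> x = y \<longleftrightarrow> (\<forall>Q. pf Q \<longrightarrow> x \<in> Q \<longleftrightarrow> y \<in> Q)"
  by (meson le_antisym le_iff_prime_filters)

end


section \<open>Tense algebras and the functor M\<close>

lemma Mfun_simps [simp]:
  "wcar (Mfun B) = tcar B" "wmeet (Mfun B) = tmeet B" "wjoin (Mfun B) = tjoin B"
  "wimp (Mfun B) x y = tG B (tjoin B (tneg B x) y)" "wcoimp (Mfun B) x y = tP B (tmeet B x (tneg B y))"
  "wbot (Mfun B) = tbot B" "wtop (Mfun B) = ttop B"
  unfolding Mfun_def by simp_all

locale tense =
  fixes B :: "('b, 'z) tba_scheme"
  assumes tense: "tense_algebra B"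
begin

sublocale dlattice "tcar B" "tmeet B" "tjoin B" "tbot B" "ttop B"
  using tense unfolding tense_algebra_def boolean_algebra_on_def dlattice_def by blast

lemma neg_closed [simp]: "x \<in> tcar B \<Longrightarrow> tneg B x \<in> tcar B"
  and meet_neg [simp]: "x \<in> tcar B \<Longrightarrow> tmeet B x (tneg B x) = tbot B"
  and join_neg [simp]: "x \<in> tcar B \<Longrightarrow> tjoin B x (tneg B x) = ttop B"
  using tense unfolding tense_algebra_def boolean_algebra_on_def by blast+

lemma G_closed [simp]: "x \<in> tcar B \<Longrightarrow> tG B x \<in> tcar B"
  using tense unfolding tense_algebra_def by blast

lemma P_closed [simp]: "x \<in> tcar B \<Longrightarrow> tP B x \<in> tcar B"
  unfolding tP_def using tense unfolding tense_algebra_def by simp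

lemma P_le_iff_le_G: "x \<in> tcar B \<Longrightarrow> y \<in> tcar B \<Longrightarrow> le (tP B x) y \<longleftrightarrow> le x (tG B y)"
  using tense unfolding tense_algebra_def tle_def le_def by blast

text \<open>Prime filters of a Boolean algebra are ultrafilters, so Boolean identities can be checked
  one prime filter at a time with \<open>eq_iff_prime_filters\<close> and \<open>le_iff_prime_filters\<close>.\<close>

lemma pf_neg_iff [simp]: "pf Q \<Longrightarrow> x \<in> tcar B \<Longrightarrow> tneg B x \<in> Q \<longleftrightarrow> x \<notin> Q"
  by (metis join_neg meet_neg neg_closed pf_bot pf_join_iff pf_meet_iff pf_top)

lemma neg_neg [simp]: "x \<in> tcar B \<Longrightarrow> tneg B (tneg B x) = x"
  by (simp add: eq_iff_prime_filters)

lemma neg_bot [simp]: "tneg B (tbot B) = ttop B"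
  and neg_top [simp]: "tneg B (ttop B) = tbot B"
  by (simp_all add: eq_iff_prime_filters)

lemma neg_unique:
  assumes "x \<in> tcar B" "y \<in> tcar B" "tmeet B x y = tbot B" "tjoin B x y = ttop B"
  shows "y = tneg B x"
  using assms by (simp add: eq_iff_prime_filters) (metis pf_bot pf_join_iff pf_meet_iff pf_top)

lemma H_eq: "x \<in> tcar B \<Longrightarrow> tH B x = tneg B (tP B (tneg B x))"
  unfolding tP_def using tense unfolding tense_algebra_def by simp

lemma G_mono: "x \<in> tcar B \<Longrightarrow> y \<in> tcar B \<Longrightarrow> le x y \<Longrightarrow> le (tG B x) (tG B y)"
  by (metis G_closed P_le_iff_le_G le_refl le_trans P_closed)

lemma P_mono: "x \<in> tcar B \<Longrightarrow> y \<in> tcar B \<Longrightarrow> le x y \<Longrightarrow> le (tP B x) (tP B y)"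
  by (metis G_closed P_le_iff_le_G le_refl le_trans P_closed)

lemma G_meet:
  assumes "x \<in> tcar B" "y \<in> tcar B"
  shows "tG B (tmeet B x y) = tmeet B (tG B x) (tG B y)"
proof (rule le_antisym)
  show "le (tG B (tmeet B x y)) (tmeet B (tG B x) (tG B y))"
    using assms by (intro meet_greatest G_mono) auto
  have "le (tP B (tmeet B (tG B x) (tG B y))) x" "le (tP B (tmeet B (tG B x) (tG B y))) y"
    using assms by (simp_all add: P_le_iff_le_G)
  then show "le (tmeet B (tG B x) (tG B y)) (tG B (tmeet B x y))"
    using assms by (simp add: meet_greatest flip: P_le_iff_le_G)
qed (use assms in simp_all)

lemma P_join:
  assumes "x \<in> tcar B" "y \<in> tcar B"
  shows "tP B (tjoin B x y) = tjoin B (tP B x) (tP B y)"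
proof (rule le_antisym)
  show "le (tjoin B (tP B x) (tP B y)) (tP B (tjoin B x y))"
    using assms by (intro join_least P_mono) auto
  have "le x (tG B (tjoin B (tP B x) (tP B y)))" "le y (tG B (tjoin B (tP B x) (tP B y)))"
    using assms by (simp_all flip: P_le_iff_le_G)
  then show "le (tP B (tjoin B x y)) (tjoin B (tP B x) (tP B y))"
    using assms by (simp add: join_least P_le_iff_le_G)
qed (use assms in simp_all)

lemma G_top [simp]: "tG B (ttop B) = ttop B"
  by (meson G_closed P_closed P_le_iff_le_G le_antisym le_top top_closed)

lemma P_bot [simp]: "tP B (tbot B) = tbot B"
  by (meson G_closed P_closed P_le_iff_le_G le_antisym bot_le bot_closed)

lemma P_G_le: "x \<in> tcar B \<Longrightarrow> le (tP B (tG B x)) x"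
  by (simp add: P_le_iff_le_G)

lemma le_G_P: "x \<in> tcar B \<Longrightarrow> le x (tG B (tP B x))"
  by (simp flip: P_le_iff_le_G)

abbreviation Mimp :: "'b \<Rightarrow> 'b \<Rightarrow> 'b" where
  "Mimp x y \<equiv> tG B (tjoin B (tneg B x) y)"

abbreviation Mcoimp :: "'b \<Rightarrow> 'b \<Rightarrow> 'b" where
  "Mcoimp x y \<equiv> tP B (tmeet B x (tneg B y))"

lemma Mimp_self: "a \<in> tcar B \<Longrightarrow> Mimp a a = ttop B"
  by (simp add: join_comm)

lemma
  assumes "a \<in> tcar B" "b \<in> tcar B" "c \<in> tcar B"
  shows Mimp_meet: "Mimp a (tmeet B b c) = tmeet B (Mimp a b) (Mimp a c)"
    and join_Mimp: "Mimp (tjoin B a b) c = tmeet B (Mimp a c) (Mimp b c)"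
    and join_Mcoimp: "Mcoimp (tjoin B a b) c = tjoin B (Mcoimp a c) (Mcoimp b c)"
    and Mcoimp_meet: "Mcoimp a (tmeet B b c) = tjoin B (Mcoimp a b) (Mcoimp a c)"
proof -
  have "tjoin B (tneg B a) (tmeet B b c) = tmeet B (tjoin B (tneg B a) b) (tjoin B (tneg B a) c)"
    and "tjoin B (tneg B (tjoin B a b)) c = tmeet B (tjoin B (tneg B a) c) (tjoin B (tneg B b) c)"
    and "tmeet B (tjoin B a b) (tneg B c) = tjoin B (tmeet B a (tneg B c)) (tmeet B b (tneg B c))"
    and "tmeet B a (tneg B (tmeet B b c)) = tjoin B (tmeet B a (tneg B b)) (tmeet B a (tneg B c))"
    using assms by (auto simp: eq_iff_prime_filters)
  then show "Mimp a (tmeet B b c) = tmeet B (Mimp a b) (Mimp a c)"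
    and "Mimp (tjoin B a b) c = tmeet B (Mimp a c) (Mimp b c)"
    and "Mcoimp (tjoin B a b) c = tjoin B (Mcoimp a c) (Mcoimp b c)"
    and "Mcoimp a (tmeet B b c) = tjoin B (Mcoimp a b) (Mcoimp a c)"
    using assms by (simp_all add: G_meet P_join)
qed

lemma
  assumes "a \<in> tcar B" "b \<in> tcar B" "c \<in> tcar B"
  shows Mimp_trans: "le (tmeet B (Mimp a b) (Mimp b c)) (Mimp a c)"
    and Mcoimp_trans: "le (Mcoimp a c) (tjoin B (Mcoimp a b) (Mcoimp b c))"
proof -
  have "le (tmeet B (tjoin B (tneg B a) b) (tjoin B (tneg B b) c)) (tjoin B (tneg B a) c)"
    and "le (tmeet B a (tneg B c)) (tjoin B (tmeet B a (tneg B b)) (tmeet B b (tneg B c)))"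
    using assms by (auto simp: le_iff_prime_filters)
  then show "le (tmeet B (Mimp a b) (Mimp b c)) (Mimp a c)"
    and "le (Mcoimp a c) (tjoin B (Mcoimp a b) (Mcoimp b c))"
    using assms by (simp_all add: G_meet [symmetric] G_mono P_join [symmetric] P_mono)
qed

lemma meet_P_Mimp_le:
  assumes "a \<in> tcar B" "b \<in> tcar B"
  shows "le (tmeet B a (tP B (Mimp a b))) b"
proof -
  have "le (tmeet B a (tP B (tG B (tjoin B (tneg B a) b)))) (tmeet B a (tjoin B (tneg B a) b))"
    using assms by (simp add: meet_mono P_G_le)
  moreover have "le (tmeet B a (tjoin B (tneg B a) b)) b"
    using assms by (simp add: le_iff_prime_filters)
  ultimately show ?thesis
    using assms le_trans [of _ "tmeet B a (tjoin B (tneg B a) b)" b] by simp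
qed

lemma le_join_G_Mcoimp:
  assumes "a \<in> tcar B" "b \<in> tcar B"
  shows "le a (tjoin B b (tG B (Mcoimp a b)))"
proof -
  have "le a (tjoin B b (tmeet B a (tneg B b)))"
    using assms by (simp add: le_iff_prime_filters)
  moreover have "le (tjoin B b (tmeet B a (tneg B b))) (tjoin B b (tG B (tP B (tmeet B a (tneg B b)))))"
    using assms by (simp add: join_mono le_G_P)
  ultimately show ?thesis
    using assms le_trans [of a "tjoin B b (tmeet B a (tneg B b))"] by simp
qed

lemma whb_algebra_Mfun: "whb_algebra (Mfun B)"
  unfolding whb_algebra_def wle_def using bdl
  by (simp add: le_def [symmetric] Mimp_self Mimp_meet join_Mimp Mimp_trans join_Mcoimp Mcoimp_meet
      Mcoimp_trans meet_P_Mimp_le le_join_G_Mcoimp)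

lemma Xsp_Mfun_iff: "Q \<in> Xsp (Mfun B) \<longleftrightarrow> pf Q"
  unfolding Xsp_def prime_filter_def pf_def wle_def le_def by simp

end

lemma M_full:
  assumes B: "tense_algebra B" and B': "tense_algebra B'" and f: "whb_hom (Mfun B) (Mfun B') f"
  shows "tba_hom B B' f"
proof -
  interpret B: tense B by (rule tense.intro) (rule B)
  interpret B': tense B' by (rule tense.intro) (rule B')
  have closed: "\<And>x. x \<in> tcar B \<Longrightarrow> f x \<in> tcar B'"
    and meet: "\<And>x y. x \<in> tcar B \<Longrightarrow> y \<in> tcar B \<Longrightarrow> f (tmeet B x y) = tmeet B' (f x) (f y)"
    and join: "\<And>x y. x \<in> tcar B \<Longrightarrow> y \<in> tcar B \<Longrightarrow> f (tjoin B x y) = tjoin B' (f x) (f y)"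
    and imp: "\<And>x y. x \<in> tcar B \<Longrightarrow> y \<in> tcar B \<Longrightarrow> f (B.Mimp x y) = B'.Mimp (f x) (f y)"
    and coimp: "\<And>x y. x \<in> tcar B \<Longrightarrow> y \<in> tcar B \<Longrightarrow> f (B.Mcoimp x y) = B'.Mcoimp (f x) (f y)"
    and bot: "f (tbot B) = tbot B'" and top: "f (ttop B) = ttop B'"
    using f unfolding whb_hom_def by simp_all
  have neg: "f (tneg B x) = tneg B' (f x)" if "x \<in> tcar B" for x
    using that closed meet [of x "tneg B x"] join [of x "tneg B x"] bot top
    by (intro B'.neg_unique) simp_all
  text \<open>\<open>G\<close> and \<open>P\<close> are the implication and coimplication of \<open>M(B)\<close> from \<open>\<top>\<close> and to \<open>\<bottom>\<close>.\<close>
  have G: "f (tG B x) = tG B' (f x)" if "x \<in> tcar B" for x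
    using imp [of "ttop B" x] that closed top by simp
  have P: "f (tP B x) = tP B' (f x)" if "x \<in> tcar B" for x
    using coimp [of x "tbot B"] that closed bot by simp
  have H: "f (tH B x) = tH B' (f x)" if "x \<in> tcar B" for x
    using that closed by (simp add: B.H_eq B'.H_eq neg P)
  show ?thesis
    unfolding tba_hom_def using closed meet join neg G H bot top by simp
qed


section \<open>The spectrum of a WHB-algebra\<close>

locale whb =
  fixes A :: "('a, 'z) whb_scheme"
  assumes whb: "whb_algebra A"
begin

sublocale dlattice "wcar A" "wmeet A" "wjoin A" "wbot A" "wtop A"
  using whb unfolding whb_algebra_def dlattice_def by blast

lemma imp_closed [simp]: "x \<in> wcar A \<Longrightarrow> y \<in> wcar A \<Longrightarrow> wimp A x y \<in> wcar A"
  and coimp_closed [simp]: "x \<in> wcar A \<Longrightarrow> y \<in> wcar A \<Longrightarrow> wcoimp A x y \<in> wcar A"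
  using whb unfolding whb_algebra_def by blast+

lemma imp_self: "a \<in> wcar A \<Longrightarrow> wimp A a a = wtop A"
  and coimp_self: "a \<in> wcar A \<Longrightarrow> wcoimp A a a = wbot A"
  using whb unfolding whb_algebra_def by blast+

lemma
  assumes "a \<in> wcar A" "b \<in> wcar A"
  shows meet_coimp_imp_le: "le (wmeet A a (wcoimp A (wimp A a b) (wbot A))) b"
    and le_join_imp_coimp: "le a (wjoin A b (wimp A (wtop A) (wcoimp A a b)))"
  using whb assms unfolding whb_algebra_def wle_def le_def by blast+

lemma
  assumes "a \<in> wcar A" "b \<in> wcar A" "c \<in> wcar A"
  shows imp_meet: "wimp A a (wmeet A b c) = wmeet A (wimp A a b) (wimp A a c)"
    and join_imp: "wimp A (wjoin A a b) c = wmeet A (wimp A a c) (wimp A b c)"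
    and imp_trans: "le (wmeet A (wimp A a b) (wimp A b c)) (wimp A a c)"
    and join_coimp: "wcoimp A (wjoin A a b) c = wjoin A (wcoimp A a c) (wcoimp A b c)"
    and coimp_meet: "wcoimp A a (wmeet A b c) = wjoin A (wcoimp A a b) (wcoimp A a c)"
    and coimp_trans: "le (wcoimp A a c) (wjoin A (wcoimp A a b) (wcoimp A b c))"
  using whb assms unfolding whb_algebra_def wle_def le_def by blast+

lemma imp_eq_top: "x \<in> wcar A \<Longrightarrow> y \<in> wcar A \<Longrightarrow> le x y \<Longrightarrow> wimp A x y = wtop A"
  using imp_meet [of x x y] imp_self [of x] by (simp add: le_def)

lemma coimp_eq_bot: "x \<in> wcar A \<Longrightarrow> y \<in> wcar A \<Longrightarrow> le x y \<Longrightarrow> wcoimp A x y = wbot A"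
  using join_coimp [of x y y] coimp_self [of y] by (simp add: le_iff_join)

lemma prime_filter_iff: "prime_filter A P \<longleftrightarrow> pf P"
  unfolding prime_filter_def pf_def wle_def le_def ..

lemma Xsp_iff: "P \<in> Xsp A \<longleftrightarrow> pf P"
  unfolding Xsp_def prime_filter_iff by simp

lemma lattice_preorder_imp:
  assumes P: "pf P"
  shows "lattice_preorder (\<lambda>x y. wimp A x y \<in> P)"
  unfolding lattice_preorder_def
proof (intro conjI ballI impI)
  fix x y z assume xyz: "x \<in> wcar A" "y \<in> wcar A" "z \<in> wcar A"
  show "wimp A x y \<in> P" if "le x y" using that xyz P by (simp add: imp_eq_top)
  show "wimp A x z \<in> P" if "wimp A x y \<in> P" "wimp A y z \<in> P"
    using that xyz P pf_up [OF P _ _ imp_trans [of x y z]] by simp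
  show "wimp A x (wmeet A y z) \<in> P" if "wimp A x y \<in> P" "wimp A x z \<in> P"
    using that xyz P by (simp add: imp_meet)
  show "wimp A (wjoin A x y) z \<in> P" if "wimp A x z \<in> P" "wimp A y z \<in> P"
    using that xyz P by (simp add: join_imp)
qed

lemma lattice_preorder_coimp:
  assumes P: "pf P"
  shows "lattice_preorder (\<lambda>x y. wcoimp A x y \<notin> P)"
  unfolding lattice_preorder_def
proof (intro conjI ballI impI)
  fix x y z assume xyz: "x \<in> wcar A" "y \<in> wcar A" "z \<in> wcar A"
  show "wcoimp A x y \<notin> P" if "le x y" using that xyz P by (simp add: coimp_eq_bot)
  show "wcoimp A x z \<notin> P" if "wcoimp A x y \<notin> P" "wcoimp A y z \<notin> P"
    using that xyz P pf_up [OF P _ _ coimp_trans [of x y z]] by auto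
  show "wcoimp A x (wmeet A y z) \<notin> P" if "wcoimp A x y \<notin> P" "wcoimp A x z \<notin> P"
    using that xyz P by (simp add: coimp_meet)
  show "wcoimp A (wjoin A x y) z \<notin> P" if "wcoimp A x z \<notin> P" "wcoimp A y z \<notin> P"
    using that xyz P by (simp add: join_coimp)
qed

lemma imp_mem_iff:
  assumes "P \<in> Xsp A" "a \<in> wcar A" "b \<in> wcar A"
  shows "wimp A a b \<in> P \<longleftrightarrow> (\<forall>Q. (P, Q) \<in> Rrel A \<longrightarrow> a \<in> Q \<longrightarrow> b \<in> Q)"
proof
  assume "\<forall>Q. (P, Q) \<in> Rrel A \<longrightarrow> a \<in> Q \<longrightarrow> b \<in> Q"
  moreover have "(P, Q) \<in> Rrel A"
    if "pf Q" "\<forall>x\<in>Q. \<forall>y\<in>wcar A. wimp A x y \<in> P \<longrightarrow> y \<in> Q" for Q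
    using that assms(1) pf_subset unfolding Rrel_def Xsp_iff by blast
  ultimately show "wimp A a b \<in> P"
    using prime_filter_rel [OF lattice_preorder_imp] assms unfolding Xsp_iff by blast
qed (use assms in \<open>auto simp: Rrel_def\<close>)

lemma coimp_mem_iff:
  assumes "P \<in> Xsp A" "a \<in> wcar A" "b \<in> wcar A"
  shows "wcoimp A a b \<in> P \<longleftrightarrow> (\<exists>Q. (P, Q) \<in> Srel A \<and> a \<in> Q \<and> b \<notin> Q)"
proof
  assume "wcoimp A a b \<in> P"
  moreover have "(P, Q) \<in> Srel A"
    if "pf Q" "\<forall>x\<in>Q. \<forall>y\<in>wcar A. wcoimp A x y \<notin> P \<longrightarrow> y \<in> Q" for Q
    using that assms(1) pf_subset unfolding Srel_def Xsp_iff by blast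
  ultimately show "\<exists>Q. (P, Q) \<in> Srel A \<and> a \<in> Q \<and> b \<notin> Q"
    using prime_filter_rel [OF lattice_preorder_coimp] assms unfolding Xsp_iff by blast
qed (use assms in \<open>auto simp: Srel_def\<close>)

text \<open>The last two WHB axioms say exactly that the canonical relations are mutually converse.\<close>

lemma Srel_eq_converse_Rrel: "Srel A = (Rrel A)\<inverse>"
proof (intro set_eqI iffI; clarify)
  fix P Q assume S: "(P, Q) \<in> Srel A"
  then have P: "pf P" and Q: "pf Q" and PQ: "P \<in> Xsp A" "Q \<in> Xsp A"
    and coimp: "\<And>x y. x \<in> wcar A \<Longrightarrow> y \<in> wcar A \<Longrightarrow> x \<in> Q \<Longrightarrow> y \<notin> Q \<Longrightarrow> wcoimp A x y \<in> P"
    unfolding Srel_def Xsp_iff by auto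
  have "b \<in> P" if ab: "a \<in> wcar A" "b \<in> wcar A" "wimp A a b \<in> Q" "a \<in> P" for a b
  proof -
    have "wcoimp A (wimp A a b) (wbot A) \<in> P"
      using coimp ab Q by simp
    then show "b \<in> P"
      using ab P pf_up [OF P _ _ meet_coimp_imp_le [of a b]] by simp
  qed
  then show "(Q, P) \<in> Rrel A"
    using PQ unfolding Rrel_def by blast
next
  fix P Q assume R: "(Q, P) \<in> Rrel A"
  then have P: "pf P" and Q: "pf Q" and PQ: "P \<in> Xsp A" "Q \<in> Xsp A"
    and imp: "\<And>x y. x \<in> wcar A \<Longrightarrow> y \<in> wcar A \<Longrightarrow> wimp A x y \<in> Q \<Longrightarrow> x \<in> P \<Longrightarrow> y \<in> P"
    unfolding Rrel_def Xsp_iff by auto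
  have "wcoimp A a b \<in> P" if ab: "a \<in> wcar A" "b \<in> wcar A" "a \<in> Q" "b \<notin> Q" for a b
  proof -
    have "wimp A (wtop A) (wcoimp A a b) \<in> Q"
      using ab Q pf_up [OF Q _ _ le_join_imp_coimp [of a b]] by simp
    then show ?thesis using imp [of "wtop A" "wcoimp A a b"] ab P by simp
  qed
  then show "(P, Q) \<in> Srel A"
    using PQ unfolding Srel_def by blast
qed

lemma sigma_subset: "sigma A a \<subseteq> Xsp A"
  unfolding sigma_def by blast

lemma sigma_meet: "a \<in> wcar A \<Longrightarrow> b \<in> wcar A \<Longrightarrow> sigma A (wmeet A a b) = sigma A a \<inter> sigma A b"
  and sigma_join: "a \<in> wcar A \<Longrightarrow> b \<in> wcar A \<Longrightarrow> sigma A (wjoin A a b) = sigma A a \<union> sigma A b"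
  and sigma_top: "sigma A (wtop A) = Xsp A"
  and sigma_bot: "sigma A (wbot A) = {}"
  by (auto simp: sigma_def Xsp_iff)

lemma sigma_le_iff: "a \<in> wcar A \<Longrightarrow> b \<in> wcar A \<Longrightarrow> sigma A a \<subseteq> sigma A b \<longleftrightarrow> le a b"
  unfolding sigma_def Xsp_iff le_iff_prime_filters by blast

lemma sigma_inj: "a \<in> wcar A \<Longrightarrow> b \<in> wcar A \<Longrightarrow> sigma A a = sigma A b \<Longrightarrow> a = b"
  using sigma_le_iff [of a b] sigma_le_iff [of b a] le_antisym by simp


section \<open>The tense algebra of clopen sets\<close>

definition subbase :: "'a set set set" where
  "subbase = sigma A ` wcar A \<union> (\<lambda>a. Xsp A - sigma A a) ` wcar A"

definition sigma_diffs :: "('a \<times> 'a) list \<Rightarrow> 'a set set" where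
  "sigma_diffs K = (\<Union>(a, b)\<in>set K. sigma A a - sigma A b)"

lemma mem_sigma_diffs: "Q \<in> sigma_diffs K \<longleftrightarrow> Q \<in> Xsp A \<and> (\<exists>(a, b)\<in>set K. a \<in> Q \<and> b \<notin> Q)"
  unfolding sigma_diffs_def sigma_def by blast

lemma tau_eq: "tau A = topology_generated_by subbase"
  unfolding tau_def subbase_def ..

lemma Xsp_in_subbase: "Xsp A \<in> subbase"
  unfolding subbase_def using sigma_top top_closed by (metis UnI1 image_eqI)

lemma Union_subbase: "\<Union>subbase = Xsp A"
  using Xsp_in_subbase sigma_subset unfolding subbase_def by blast

lemma topspace_tau [simp]: "topspace (tau A) = Xsp A"
  unfolding tau_eq topology_generated_by_topspace Union_subbase ..

lemma clopen_sigma_diff: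
  assumes "a \<in> wcar A" "b \<in> wcar A"
  shows "openin (tau A) (sigma A a - sigma A b)" and "closedin (tau A) (sigma A a - sigma A b)"
proof -
  have subbasic: "openin (tau A) (sigma A c)" "openin (tau A) (Xsp A - sigma A c)" if "c \<in> wcar A" for c
    unfolding tau_eq using that by (auto intro: topology_generated_by_Basis simp: subbase_def)
  have "sigma A a - sigma A b = sigma A a \<inter> (Xsp A - sigma A b)"
    using sigma_subset by blast
  then show "openin (tau A) (sigma A a - sigma A b)"
    using subbasic assms by auto
  have "Xsp A - (sigma A a - sigma A b) = (Xsp A - sigma A a) \<union> sigma A b"
    and "sigma A a - sigma A b \<subseteq> Xsp A"
    using sigma_subset by blast+
  then show "closedin (tau A) (sigma A a - sigma A b)"
    unfolding closedin_def using subbasic assms sigma_subset by (auto intro: openin_Un)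
qed

lemma clopen_sigma_diffs: "set K \<subseteq> wcar A \<times> wcar A \<Longrightarrow> sigma_diffs K \<in> clopens A"
  unfolding clopens_def sigma_diffs_def
  by (auto intro!: openin_Union closedin_Union clopen_sigma_diff)

lemma clopen_sigma: "a \<in> wcar A \<Longrightarrow> sigma A a \<in> clopens A"
  using clopen_sigma_diffs [of "[(a, wbot A)]"] by (simp add: sigma_diffs_def sigma_bot)

lemma open_sigma_diff_nhd:
  assumes "openin (tau A) W" "P \<in> W"
  shows "\<exists>a\<in>wcar A. \<exists>b\<in>wcar A. P \<in> sigma A a - sigma A b \<and> sigma A a - sigma A b \<subseteq> W"
proof -
  have "generate_topology_on subbase W"
    using assms(1) unfolding tau_eq openin_topology_generated_by_iff .
  then show ?thesis using assms(2)
  proof (induction arbitrary: P rule: generate_topology_on.induct)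
    case (Int U V)
    then obtain a1 b1 a2 b2 where ab: "a1 \<in> wcar A" "b1 \<in> wcar A" "a2 \<in> wcar A" "b2 \<in> wcar A"
      "P \<in> sigma A a1 - sigma A b1" "sigma A a1 - sigma A b1 \<subseteq> U"
      "P \<in> sigma A a2 - sigma A b2" "sigma A a2 - sigma A b2 \<subseteq> V" by blast
    then have "sigma A (wmeet A a1 a2) - sigma A (wjoin A b1 b2) = (sigma A a1 - sigma A b1) \<inter> (sigma A a2 - sigma A b2)"
      by (auto simp: sigma_meet sigma_join)
    then show ?case
      using ab by (intro bexI [of _ "wmeet A a1 a2"] bexI [of _ "wjoin A b1 b2"]) auto
  next
    case (Basis s)
    then obtain c where c: "c \<in> wcar A" "s = sigma A c \<or> s = sigma A (wtop A) - sigma A c"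
      unfolding subbase_def sigma_top by blast
    then have "s = sigma A c - sigma A (wbot A) \<or> s = sigma A (wtop A) - sigma A c"
      by (auto simp: sigma_bot)
    then show ?case
      using Basis.prems c(1) bot_closed top_closed by blast
  qed blast+
qed

lemma subbase_intersections:
  "(finite intersection_of (\<lambda>x. x \<in> subbase) relative_to Xsp A) = finite' intersection_of (\<lambda>x. x \<in> subbase)"
proof (intro ext iffI)
  fix S assume "(finite intersection_of (\<lambda>x. x \<in> subbase) relative_to Xsp A) S"
  then obtain \<U> where "finite \<U>" "\<U> \<subseteq> subbase" "S = Xsp A \<inter> \<Inter>\<U>"
    unfolding relative_to_def intersection_of_def by auto
  with Xsp_in_subbase show "(finite' intersection_of (\<lambda>x. x \<in> subbase)) S"
    unfolding intersection_of_def by (intro exI [of _ "insert (Xsp A) \<U>"]) auto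
next
  fix S assume "(finite' intersection_of (\<lambda>x. x \<in> subbase)) S"
  then obtain \<U> where "finite \<U>" "\<U> \<noteq> {}" "\<U> \<subseteq> subbase" "\<Inter>\<U> = S"
    unfolding intersection_of_def by auto
  moreover from this have "S \<subseteq> Xsp A" using Union_subbase by blast
  ultimately show "(finite intersection_of (\<lambda>x. x \<in> subbase) relative_to Xsp A) S"
    unfolding relative_to_def intersection_of_def by blast
qed

text \<open>If no finite subfamily covers, no finite meet of the \<open>b\<close> with \<open>Xsp A - \<sigma> b\<close> in the cover lies
  below a finite join of the \<open>a\<close> with \<open>\<sigma> a\<close> in the cover, and a prime filter separating them is
  not covered.\<close>

lemma subbase_cover_finite:
  assumes \<C>: "\<C> \<subseteq> subbase" "Xsp A \<subseteq> \<Union>\<C>"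
  shows "\<exists>\<C>'. finite \<C>' \<and> \<C>' \<subseteq> \<C> \<and> Xsp A \<subseteq> \<Union>\<C>'"
proof -
  define Ps where "Ps = {a \<in> wcar A. sigma A a \<in> \<C>}"
  define Ns where "Ns = {b \<in> wcar A. Xsp A - sigma A b \<in> \<C>}"
  define F where "F = {foldr (wmeet A) bs (wtop A) | bs. set bs \<subseteq> Ns}"
  define I where "I = {foldr (wjoin A) as (wbot A) | as. set as \<subseteq> Ps}"
  have PN: "Ps \<subseteq> wcar A" "Ns \<subseteq> wcar A" unfolding Ps_def Ns_def by auto
  show ?thesis
  proof (cases "\<exists>x\<in>F. \<exists>y\<in>I. le x y")
    case True
    then obtain as bs where ab: "set as \<subseteq> Ps" "set bs \<subseteq> Ns"
      and le: "le (foldr (wmeet A) bs (wtop A)) (foldr (wjoin A) as (wbot A))"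
      unfolding F_def I_def by blast
    have "Xsp A \<subseteq> \<Union>(sigma A ` set as \<union> (\<lambda>b. Xsp A - sigma A b) ` set bs)"
    proof
      fix Q assume Q: "Q \<in> Xsp A"
      then have "pf Q" by (simp add: Xsp_iff)
      have "\<exists>a\<in>set as. a \<in> Q" if "set bs \<subseteq> Q"
        using pf_up [OF \<open>pf Q\<close> _ _ le] \<open>pf Q\<close> that ab PN by (simp add: pf_meets_iff pf_joins_iff)
      then show "Q \<in> \<Union>(sigma A ` set as \<union> (\<lambda>b. Xsp A - sigma A b) ` set bs)"
        using Q unfolding sigma_def by blast
    qed
    moreover have "sigma A ` set as \<union> (\<lambda>b. Xsp A - sigma A b) ` set bs \<subseteq> \<C>"
      using ab unfolding Ps_def Ns_def by blast
    ultimately show ?thesis by (meson finite_UnI finite_imageI finite_set)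
  next
    case False
    have "F \<subseteq> wcar A" "I \<subseteq> wcar A"
      using PN unfolding F_def I_def by force+
    moreover have "wtop A \<in> F" "wbot A \<in> I"
      unfolding F_def I_def by (auto intro!: exI [of _ "[]"])
    moreover have "wmeet A x y \<in> F" if xy: "x \<in> F" "y \<in> F" for x y
    proof -
      obtain bs bs' where "set bs \<subseteq> Ns" "set bs' \<subseteq> Ns"
        "x = foldr (wmeet A) bs (wtop A)" "y = foldr (wmeet A) bs' (wtop A)"
        using xy unfolding F_def by blast
      then show ?thesis
        unfolding F_def using PN meets_append [of bs bs'] by (intro CollectI exI [of _ "bs @ bs'"]) auto
    qed
    moreover have "wjoin A x y \<in> I" if xy: "x \<in> I" "y \<in> I" for x y
    proof -
      obtain as as' where "set as \<subseteq> Ps" "set as' \<subseteq> Ps"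
        "x = foldr (wjoin A) as (wbot A)" "y = foldr (wjoin A) as' (wbot A)"
        using xy unfolding I_def by blast
      then show ?thesis
        unfolding I_def using PN joins_append [of as as'] by (intro CollectI exI [of _ "as @ as'"]) auto
    qed
    ultimately obtain Q where Q: "pf Q" "F \<subseteq> Q" "Q \<inter> I = {}"
      using prime_filter_separation [OF lattice_preorder_le, of F I] False by blast
    then obtain S where "S \<in> \<C>" "Q \<in> S"
      using \<C>(2) by (auto simp: Xsp_iff)
    then obtain c where c: "c \<in> wcar A" "S = sigma A c \<or> S = Xsp A - sigma A c"
      using \<C>(1) unfolding subbase_def by blast
    from c(2) show ?thesis
    proof
      assume "S = sigma A c"
      then have "c \<in> Ps" "c \<in> Q" using c(1) \<open>S \<in> \<C>\<close> \<open>Q \<in> S\<close> unfolding Ps_def sigma_def by auto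
      moreover from this have "c \<in> I" unfolding I_def using c(1) by (intro CollectI exI [of _ "[c]"]) auto
      ultimately show ?thesis using Q(3) by blast
    next
      assume "S = Xsp A - sigma A c"
      then have "c \<in> Ns" "c \<notin> Q" using c(1) \<open>S \<in> \<C>\<close> \<open>Q \<in> S\<close> unfolding Ns_def sigma_def by auto
      moreover from this have "c \<in> F" unfolding F_def using c(1) by (intro CollectI exI [of _ "[c]"]) auto
      ultimately show ?thesis using Q(2) by blast
    qed
  qed
qed

lemma compact_space_tau: "compact_space (tau A)"
proof (rule Alexander_subbase_alt [where \<B> = subbase and U = "Xsp A"])
  show "topology (arbitrary union_of (finite intersection_of (\<lambda>x. x \<in> subbase) relative_to Xsp A)) = tau A"
    unfolding tau_eq generate_topology_on_eq subbase_intersections ..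
qed (use Union_subbase subbase_cover_finite in auto)

lemma clopen_iff_sigma_diffs:
  "U \<in> clopens A \<longleftrightarrow> (\<exists>K. set K \<subseteq> wcar A \<times> wcar A \<and> U = sigma_diffs K)"
proof
  assume U: "U \<in> clopens A"
  define d where "d = (\<lambda>(a, b). sigma A a - sigma A b)"
  define Ks where "Ks = {p \<in> wcar A \<times> wcar A. d p \<subseteq> U}"
  have "compactin (tau A) U"
    using closedin_compact_space [OF compact_space_tau] U unfolding clopens_def by blast
  moreover have "\<forall>V\<in>d ` Ks. openin (tau A) V"
    unfolding Ks_def d_def using clopen_sigma_diff by auto
  moreover have "U \<subseteq> \<Union>(d ` Ks)"
  proof
    fix P assume "P \<in> U"
    then obtain a b where "a \<in> wcar A" "b \<in> wcar A" "P \<in> sigma A a - sigma A b" "sigma A a - sigma A b \<subseteq> U"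
      using open_sigma_diff_nhd U unfolding clopens_def by blast
    then show "P \<in> \<Union>(d ` Ks)" unfolding Ks_def d_def by (auto intro!: bexI [of _ "(a, b)"])
  qed
  ultimately obtain \<F> where "finite \<F>" "\<F> \<subseteq> d ` Ks" "U \<subseteq> \<Union>\<F>"
    unfolding compactin_def by blast
  then obtain K' where K': "K' \<subseteq> Ks" "finite K'" "U \<subseteq> \<Union>(d ` K')"
    by (metis finite_subset_image)
  obtain K where K: "set K = K'" using finite_list K'(2) by blast
  have "set K \<subseteq> wcar A \<times> wcar A"
    using K'(1) unfolding K Ks_def by blast
  moreover have "\<Union>(d ` K') \<subseteq> U"
    using K'(1) unfolding Ks_def by blast
  then have "U = sigma_diffs K"
    using K'(3) unfolding sigma_diffs_def d_def K by (rule equalityI [rotated])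
  ultimately show "\<exists>K. set K \<subseteq> wcar A \<times> wcar A \<and> U = sigma_diffs K"
    by blast
qed (auto intro: clopen_sigma_diffs)

lemma clopen_compl: "U \<in> clopens A \<Longrightarrow> Xsp A - U \<in> clopens A"
  unfolding clopens_def by (metis closedin_def openin_closedin_eq topspace_tau mem_Collect_eq)

lemma clopen_subset: "U \<in> clopens A \<Longrightarrow> U \<subseteq> Xsp A"
  unfolding clopens_def using openin_subset by fastforce

lemma clopen_eq_compl_sigma_diffs:
  assumes "U \<in> clopens A"
  obtains K where "set K \<subseteq> wcar A \<times> wcar A" "U = Xsp A - sigma_diffs K"
proof -
  obtain K where "set K \<subseteq> wcar A \<times> wcar A" "Xsp A - U = sigma_diffs K"
    using clopen_compl [OF assms] clopen_iff_sigma_diffs by blast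
  moreover have "U = Xsp A - (Xsp A - U)" using clopen_subset [OF assms] by blast
  ultimately show ?thesis using that by simp
qed

lemma Rrel_subset: "Rrel A \<subseteq> Xsp A \<times> Xsp A"
  and Srel_subset: "Srel A \<subseteq> Xsp A \<times> Xsp A"
  unfolding Rrel_def Srel_def by auto

definition imps :: "('a \<times> 'a) list \<Rightarrow> 'a" where
  "imps K = foldr (wmeet A) (map (\<lambda>(a, b). wimp A a b) K) (wtop A)"

definition coimps :: "('a \<times> 'a) list \<Rightarrow> 'a" where
  "coimps K = foldr (wjoin A) (map (\<lambda>(a, b). wcoimp A a b) K) (wbot A)"

lemma imps_simps [simp]:
    "imps [] = wtop A" "imps (p # K) = wmeet A (wimp A (fst p) (snd p)) (imps K)"
  and coimps_simps [simp]:
    "coimps [] = wbot A" "coimps (p # K) = wjoin A (wcoimp A (fst p) (snd p)) (coimps K)"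
  unfolding imps_def coimps_def by (simp_all add: case_prod_beta)

lemma imps_closed [simp]: "set K \<subseteq> wcar A \<times> wcar A \<Longrightarrow> imps K \<in> wcar A"
  and coimps_closed [simp]: "set K \<subseteq> wcar A \<times> wcar A \<Longrightarrow> coimps K \<in> wcar A"
  by (induction K) auto

lemma pf_imps_iff:
  "pf P \<Longrightarrow> set K \<subseteq> wcar A \<times> wcar A \<Longrightarrow> imps K \<in> P \<longleftrightarrow> (\<forall>(a, b)\<in>set K. wimp A a b \<in> P)"
  by (induction K) auto

lemma pf_coimps_iff:
  "pf P \<Longrightarrow> set K \<subseteq> wcar A \<times> wcar A \<Longrightarrow> coimps K \<in> P \<longleftrightarrow> (\<exists>(a, b)\<in>set K. wcoimp A a b \<in> P)"
  by (induction K) auto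

lemma GA_compl_sigma_diffs:
  assumes K: "set K \<subseteq> wcar A \<times> wcar A"
  shows "GA A (Xsp A - sigma_diffs K) = sigma A (imps K)"
proof (intro set_eqI)
  fix P
  have "P \<in> GA A (Xsp A - sigma_diffs K) \<longleftrightarrow> P \<in> Xsp A \<and> (\<forall>Q. (P, Q) \<in> Rrel A \<longrightarrow> Q \<notin> sigma_diffs K)"
    unfolding GA_def using Rrel_subset by auto
  also have "\<dots> \<longleftrightarrow> P \<in> Xsp A \<and> (\<forall>(a, b)\<in>set K. \<forall>Q. (P, Q) \<in> Rrel A \<longrightarrow> a \<in> Q \<longrightarrow> b \<in> Q)"
    using Rrel_subset by (auto simp: mem_sigma_diffs)
  also have "\<dots> \<longleftrightarrow> P \<in> Xsp A \<and> (\<forall>(a, b)\<in>set K. wimp A a b \<in> P)"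
  proof -
    have "wimp A a b \<in> P \<longleftrightarrow> (\<forall>Q. (P, Q) \<in> Rrel A \<longrightarrow> a \<in> Q \<longrightarrow> b \<in> Q)"
      if "P \<in> Xsp A" "(a, b) \<in> set K" for a b
      using that K by (intro imp_mem_iff) auto
    then show ?thesis by (intro conj_cong refl ball_cong) auto
  qed
  also have "\<dots> \<longleftrightarrow> P \<in> sigma A (imps K)"
    using K by (auto simp: sigma_def Xsp_iff pf_imps_iff)
  finally show "P \<in> GA A (Xsp A - sigma_diffs K) \<longleftrightarrow> P \<in> sigma A (imps K)" .
qed

lemma HA_compl_sigma_diffs:
  assumes K: "set K \<subseteq> wcar A \<times> wcar A"
  shows "HA A (Xsp A - sigma_diffs K) = Xsp A - sigma A (coimps K)"
proof (intro set_eqI)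
  fix P
  have "P \<in> HA A (Xsp A - sigma_diffs K) \<longleftrightarrow> P \<in> Xsp A \<and> (\<forall>Q. (P, Q) \<in> Srel A \<longrightarrow> Q \<notin> sigma_diffs K)"
    unfolding HA_def using Srel_subset by auto
  also have "\<dots> \<longleftrightarrow> P \<in> Xsp A \<and> (\<forall>(a, b)\<in>set K. \<not> (\<exists>Q. (P, Q) \<in> Srel A \<and> a \<in> Q \<and> b \<notin> Q))"
    using Srel_subset by (auto simp: mem_sigma_diffs)
  also have "\<dots> \<longleftrightarrow> P \<in> Xsp A \<and> (\<forall>(a, b)\<in>set K. wcoimp A a b \<notin> P)"
  proof -
    have "wcoimp A a b \<in> P \<longleftrightarrow> (\<exists>Q. (P, Q) \<in> Srel A \<and> a \<in> Q \<and> b \<notin> Q)"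
      if "P \<in> Xsp A" "(a, b) \<in> set K" for a b
      using that K by (intro coimp_mem_iff) auto
    then show ?thesis by (intro conj_cong refl ball_cong) auto
  qed
  also have "\<dots> \<longleftrightarrow> P \<in> Xsp A - sigma A (coimps K)"
    using K by (auto simp: sigma_def Xsp_iff pf_coimps_iff)
  finally show "P \<in> HA A (Xsp A - sigma_diffs K) \<longleftrightarrow> P \<in> Xsp A - sigma A (coimps K)" .
qed

lemma GA_clopen: "U \<in> clopens A \<Longrightarrow> GA A U \<in> clopens A"
  by (metis GA_compl_sigma_diffs clopen_eq_compl_sigma_diffs clopen_sigma imps_closed)

lemma HA_clopen: "U \<in> clopens A \<Longrightarrow> HA A U \<in> clopens A"
  by (metis HA_compl_sigma_diffs clopen_eq_compl_sigma_diffs clopen_compl clopen_sigma coimps_closed)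

lemma clopen_Int: "U \<in> clopens A \<Longrightarrow> V \<in> clopens A \<Longrightarrow> U \<inter> V \<in> clopens A"
  and clopen_Un: "U \<in> clopens A \<Longrightarrow> V \<in> clopens A \<Longrightarrow> U \<union> V \<in> clopens A"
  and clopen_empty: "{} \<in> clopens A"
  and clopen_Xsp: "Xsp A \<in> clopens A"
  unfolding clopens_def by (auto simp flip: topspace_tau)

lemma boolean_algebra_Tfun: "boolean_algebra_on (Tfun A)"
proof -
  have "bdl (clopens A) (\<inter>) (\<union>) {} (Xsp A)"
    unfolding bdl_def using clopen_Int clopen_Un clopen_empty clopen_Xsp clopen_subset by blast
  then show ?thesis
    unfolding boolean_algebra_on_def Tfun_def using clopen_compl clopen_subset by auto
qed

lemma tense_algebra_Tfun: "tense_algebra (Tfun A)"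
proof -
  have tle: "tle (Tfun A) x y \<longleftrightarrow> x \<subseteq> y" for x y
    unfolding tle_def Tfun_def by auto
  have P: "tP (Tfun A) x = {P. \<exists>Q. (Q, P) \<in> Rrel A \<and> Q \<in> x}"
    and F: "tF (Tfun A) x = {P. \<exists>Q. (P, Q) \<in> Rrel A \<and> Q \<in> x}" for x
    unfolding tP_def tF_def Tfun_def HA_def GA_def Srel_eq_converse_Rrel
    by (auto simp: Rrel_def)
  have "x \<subseteq> Xsp A" if "x \<in> clopens A" for x
    using that clopen_subset by blast
  then show ?thesis
    unfolding tense_algebra_def tle P F
    using boolean_algebra_Tfun GA_clopen HA_clopen
    by (auto simp: Tfun_def GA_def HA_def Srel_eq_converse_Rrel Rrel_def)
qed

lemma whb_hom_sigma: "whb_hom A (Mfun (Tfun A)) (sigma A)"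
proof -
  have "sigma A (wimp A a b) = GA A (Xsp A - sigma A a \<union> sigma A b)"
    and "sigma A (wcoimp A a b) = Xsp A - HA A (Xsp A - sigma A a \<inter> (Xsp A - sigma A b))"
    if "a \<in> wcar A" "b \<in> wcar A" for a b
  proof -
    have "Xsp A - sigma_diffs [(a, b)] = Xsp A - sigma A a \<union> sigma A b"
      and "Xsp A - sigma A a \<union> sigma A b = Xsp A - sigma A a \<inter> (Xsp A - sigma A b)"
      and "Xsp A - (Xsp A - sigma A (wcoimp A a b)) = sigma A (wcoimp A a b)"
      using sigma_subset by (auto simp: sigma_diffs_def)
    then show "sigma A (wimp A a b) = GA A (Xsp A - sigma A a \<union> sigma A b)"
      and "sigma A (wcoimp A a b) = Xsp A - HA A (Xsp A - sigma A a \<inter> (Xsp A - sigma A b))"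
      using that GA_compl_sigma_diffs [of "[(a, b)]"] HA_compl_sigma_diffs [of "[(a, b)]"] by simp_all
  qed
  then show ?thesis
    unfolding whb_hom_def Mfun_def Tfun_def tP_def
    by (simp add: clopen_sigma sigma_meet sigma_join sigma_bot sigma_top)
qed

end


locale whb_morphism = A: whb A + A': whb A'
  for A :: "('a, 'z) whb_scheme" and A' :: "('c, 'y) whb_scheme" +
  fixes h :: "'a \<Rightarrow> 'c"
  assumes hom: "whb_hom A A' h"
begin

lemma hom_closed [simp]: "a \<in> wcar A \<Longrightarrow> h a \<in> wcar A'"
  and hom_bot [simp]: "h (wbot A) = wbot A'"
  and hom_top [simp]: "h (wtop A) = wtop A'"
  using hom unfolding whb_hom_def by blast+

lemma
  assumes "a \<in> wcar A" "b \<in> wcar A"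
  shows hom_meet: "h (wmeet A a b) = wmeet A' (h a) (h b)"
    and hom_join: "h (wjoin A a b) = wjoin A' (h a) (h b)"
    and hom_imp: "h (wimp A a b) = wimp A' (h a) (h b)"
    and hom_coimp: "h (wcoimp A a b) = wcoimp A' (h a) (h b)"
  using hom assms unfolding whb_hom_def by blast+

lemma hom_imps: "set K \<subseteq> wcar A \<times> wcar A \<Longrightarrow> h (A.imps K) = A'.imps (map (map_prod h h) K)"
  by (induction K) (auto simp: hom_meet hom_imp)

lemma hom_coimps: "set K \<subseteq> wcar A \<times> wcar A \<Longrightarrow> h (A.coimps K) = A'.coimps (map (map_prod h h) K)"
  by (induction K) (auto simp: hom_join hom_coimp)

definition pullback :: "'c set \<Rightarrow> 'a set" where
  "pullback Q = {a \<in> wcar A. h a \<in> Q}"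

lemma hom_le: "a \<in> wcar A \<Longrightarrow> b \<in> wcar A \<Longrightarrow> A.le a b \<Longrightarrow> A'.le (h a) (h b)"
  unfolding A.le_def A'.le_def by (metis hom_meet)

lemma pullback_Xsp:
  assumes "Q \<in> Xsp A'"
  shows "pullback Q \<in> Xsp A"
proof -
  have Q: "A'.pf Q" using assms by (simp add: A'.Xsp_iff)
  have "A.pf {a \<in> wcar A. h a \<in> Q}"
    unfolding A.pf_def
  proof (intro conjI ballI impI)
    fix x y assume "x \<in> {a \<in> wcar A. h a \<in> Q}" "y \<in> {a \<in> wcar A. h a \<in> Q}"
    then show "wmeet A x y \<in> {a \<in> wcar A. h a \<in> Q}" using Q by (simp add: hom_meet)
  next
    fix x y assume "x \<in> {a \<in> wcar A. h a \<in> Q}" "y \<in> wcar A" "A.le x y"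
    then show "y \<in> {a \<in> wcar A. h a \<in> Q}" using A'.pf_up [OF Q _ hom_closed hom_le] by auto
  next
    fix x y assume "x \<in> wcar A" "y \<in> wcar A" "wjoin A x y \<in> {a \<in> wcar A. h a \<in> Q}"
    then show "x \<in> {a \<in> wcar A. h a \<in> Q} \<or> y \<in> {a \<in> wcar A. h a \<in> Q}" using Q by (simp add: hom_join)
  qed (use Q in auto)
  then show ?thesis unfolding pullback_def A.Xsp_iff .
qed

lemma Tmor_eq: "Tmor A A' h U = {Q \<in> Xsp A'. pullback Q \<in> U}"
  unfolding Tmor_def pullback_def ..

lemma Tmor_sigma: "a \<in> wcar A \<Longrightarrow> Tmor A A' h (sigma A a) = sigma A' (h a)"
  unfolding Tmor_eq sigma_def using pullback_Xsp by (auto simp: pullback_def)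

lemma Tmor_sigma_diffs:
  assumes K: "set K \<subseteq> wcar A \<times> wcar A"
  shows "Tmor A A' h (A.sigma_diffs K) = A'.sigma_diffs (map (map_prod h h) K)"
proof (intro set_eqI)
  fix Q
  have "(\<exists>(a, b)\<in>set K. a \<in> pullback Q \<and> b \<notin> pullback Q) \<longleftrightarrow> (\<exists>(a, b)\<in>set K. h a \<in> Q \<and> h b \<notin> Q)"
    using K unfolding pullback_def by (intro bex_cong refl) auto
  then show "Q \<in> Tmor A A' h (A.sigma_diffs K) \<longleftrightarrow> Q \<in> A'.sigma_diffs (map (map_prod h h) K)"
    unfolding Tmor_eq A.mem_sigma_diffs A'.mem_sigma_diffs using pullback_Xsp
    by (auto simp: case_prod_map_prod)
qed

lemma Tmor_compl: "Tmor A A' h (Xsp A - U) = Xsp A' - Tmor A A' h U"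
  and Tmor_Int: "Tmor A A' h (U \<inter> V) = Tmor A A' h U \<inter> Tmor A A' h V"
  and Tmor_Un: "Tmor A A' h (U \<union> V) = Tmor A A' h U \<union> Tmor A A' h V"
  and Tmor_empty: "Tmor A A' h {} = {}"
  and Tmor_Xsp: "Tmor A A' h (Xsp A) = Xsp A'"
  unfolding Tmor_eq using pullback_Xsp by auto

lemma Tmor_clopen:
  assumes "U \<in> clopens A"
  shows "Tmor A A' h U \<in> clopens A'"
proof -
  obtain K where K: "set K \<subseteq> wcar A \<times> wcar A" "U = A.sigma_diffs K"
    using assms A.clopen_iff_sigma_diffs by blast
  then have "set (map (map_prod h h) K) \<subseteq> wcar A' \<times> wcar A'" by auto
  then show ?thesis unfolding K(2) Tmor_sigma_diffs [OF K(1)] by (rule A'.clopen_sigma_diffs)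
qed

lemma Tmor_GA: "U \<in> clopens A \<Longrightarrow> Tmor A A' h (GA A U) = GA A' (Tmor A A' h U)"
proof (elim A.clopen_eq_compl_sigma_diffs)
  fix K assume K: "set K \<subseteq> wcar A \<times> wcar A" and U: "U = Xsp A - A.sigma_diffs K"
  then have K': "set (map (map_prod h h) K) \<subseteq> wcar A' \<times> wcar A'" by auto
  show ?thesis
    unfolding U Tmor_compl Tmor_sigma_diffs [OF K] A.GA_compl_sigma_diffs [OF K] A'.GA_compl_sigma_diffs [OF K']
    using K by (simp add: Tmor_sigma hom_imps)
qed

lemma Tmor_HA: "U \<in> clopens A \<Longrightarrow> Tmor A A' h (HA A U) = HA A' (Tmor A A' h U)"
proof (elim A.clopen_eq_compl_sigma_diffs)
  fix K assume K: "set K \<subseteq> wcar A \<times> wcar A" and U: "U = Xsp A - A.sigma_diffs K"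
  then have K': "set (map (map_prod h h) K) \<subseteq> wcar A' \<times> wcar A'" by auto
  show ?thesis
    unfolding U Tmor_compl Tmor_sigma_diffs [OF K] A.HA_compl_sigma_diffs [OF K] A'.HA_compl_sigma_diffs [OF K']
    using K by (simp add: Tmor_compl Tmor_sigma hom_coimps)
qed

lemma tba_hom_Tmor: "tba_hom (Tfun A) (Tfun A') (Tmor A A' h)"
  unfolding tba_hom_def
  by (simp add: Tfun_def Tmor_clopen Tmor_compl Tmor_Int Tmor_Un Tmor_empty Tmor_Xsp Tmor_GA Tmor_HA)

text \<open>Separate the image of \<open>P\<close> from the image of its complement.\<close>

lemma pullback_surj:
  assumes inj: "inj_on h (wcar A)" and P: "P \<in> Xsp A"
  shows "\<exists>Q\<in>Xsp A'. pullback Q = P"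
proof -
  have pP: "A.pf P" and PC: "P \<subseteq> wcar A" using P A.pf_subset by (auto simp: A.Xsp_iff)
  have "h (wtop A) \<in> h ` P" "h (wbot A) \<in> h ` (wcar A - P)"
    using pP by (intro imageI; simp)+
  then have "h ` P \<noteq> {}" "h ` (wcar A - P) \<noteq> {}" by blast+
  moreover have "h ` P \<subseteq> wcar A'" "h ` (wcar A - P) \<subseteq> wcar A'"
    using PC by auto
  moreover have "\<forall>x\<in>h ` P. \<forall>y\<in>h ` P. wmeet A' x y \<in> h ` P"
    using pP PC by (auto simp: hom_meet [symmetric] subset_iff)
  moreover have "\<forall>x\<in>h ` (wcar A - P). \<forall>y\<in>h ` (wcar A - P). wjoin A' x y \<in> h ` (wcar A - P)"
    using pP by (auto simp: hom_join [symmetric])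
  moreover have "\<not> A'.le (h p) (h c)" if "p \<in> P" "c \<in> wcar A - P" for p c
  proof
    assume "A'.le (h p) (h c)"
    then have "h (wmeet A p c) = h p" using that PC by (auto simp: hom_meet A'.le_def)
    then have "A.le p c" using inj that PC unfolding inj_on_def A.le_def by auto
    then show False using A.pf_up [OF pP] that by blast
  qed
  ultimately obtain Q where "A'.pf Q" "h ` P \<subseteq> Q" "Q \<inter> h ` (wcar A - P) = {}"
    using A'.prime_filter_separation [OF A'.lattice_preorder_le, of "h ` P" "h ` (wcar A - P)"] by blast
  then have "pullback Q = P" "Q \<in> Xsp A'"
    using PC unfolding pullback_def A'.Xsp_iff by auto
  then show ?thesis by blast
qed

lemma inj_on_Tmor:
  assumes "inj_on h (wcar A)"
  shows "inj_on (Tmor A A' h) (tcar (Tfun A))"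
proof (rule inj_onI)
  fix U V assume "U \<in> tcar (Tfun A)" "V \<in> tcar (Tfun A)" and eq: "Tmor A A' h U = Tmor A A' h V"
  then have "U \<subseteq> Xsp A" "V \<subseteq> Xsp A" by (auto simp: Tfun_def dest: A.clopen_subset)
  then show "U = V"
    using eq pullback_surj [OF assms] unfolding Tmor_eq by blast
qed

end


section \<open>The universal property of T\<close>

locale whb_to_tense = A: whb A + B: tense B
  for A :: "('a, 'z) whb_scheme" and B :: "('b, 'y) tba_scheme" +
  fixes f :: "'a \<Rightarrow> 'b"
  assumes hom: "whb_hom A (Mfun B) f"

sublocale whb_to_tense \<subseteq> whb_morphism A "Mfun B" f
  by unfold_locales (use B.whb_algebra_Mfun hom in \<open>auto simp: whb_def\<close>)

context whb_to_tense
begin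

lemma f_closed [simp]: "a \<in> wcar A \<Longrightarrow> f a \<in> tcar B"
  using hom_closed by simp

text \<open>Since prime filters separate the points of \<open>B\<close>, an element representing \<open>U\<close> is unique;
  the extension of \<open>f\<close> maps every clopen set to its representative.\<close>

definition represents :: "'a set set \<Rightarrow> 'b \<Rightarrow> bool" where
  "represents U x \<longleftrightarrow> x \<in> tcar B \<and> (\<forall>Q. B.pf Q \<longrightarrow> x \<in> Q \<longleftrightarrow> pullback Q \<in> U)"

definition extension :: "'a set set \<Rightarrow> 'b" where
  "extension U = (THE x. represents U x)"

lemma represents_unique: "represents U x \<Longrightarrow> represents U y \<Longrightarrow> x = y"
  unfolding represents_def by (simp add: B.eq_iff_prime_filters)

lemma extension_eq: "represents U x \<Longrightarrow> extension U = x"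
  unfolding extension_def using represents_unique by blast

lemma pullback_Xsp_Mfun: "B.pf Q \<Longrightarrow> pullback Q \<in> Xsp A"
  using pullback_Xsp B.Xsp_Mfun_iff by blast

lemma represents_sigma: "a \<in> wcar A \<Longrightarrow> represents (sigma A a) (f a)"
  unfolding represents_def sigma_def pullback_def using pullback_Xsp_Mfun
  by (auto simp: pullback_def)

lemma represents_compl: "represents U x \<Longrightarrow> represents (Xsp A - U) (tneg B x)"
  unfolding represents_def using pullback_Xsp_Mfun by auto

lemma represents_Int: "represents U x \<Longrightarrow> represents V y \<Longrightarrow> represents (U \<inter> V) (tmeet B x y)"
  and represents_Un: "represents U x \<Longrightarrow> represents V y \<Longrightarrow> represents (U \<union> V) (tjoin B x y)"
  unfolding represents_def by auto

lemma represents_empty: "represents {} (tbot B)"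
  and represents_Xsp: "represents (Xsp A) (ttop B)"
  unfolding represents_def using pullback_Xsp_Mfun by auto

definition f_diffs :: "('a \<times> 'a) list \<Rightarrow> 'b" where
  "f_diffs K = foldr (tjoin B) (map (\<lambda>(a, b). tmeet B (f a) (tneg B (f b))) K) (tbot B)"

lemma f_diffs_simps [simp]: "f_diffs [] = tbot B"
  "f_diffs (p # K) = tjoin B (tmeet B (f (fst p)) (tneg B (f (snd p)))) (f_diffs K)"
  unfolding f_diffs_def by (simp_all add: case_prod_beta)

lemma represents_f_diffs: "set K \<subseteq> wcar A \<times> wcar A \<Longrightarrow> represents (A.sigma_diffs K) (f_diffs K)"
proof (induction K)
  case Nil
  then show ?case using represents_empty by (simp add: A.sigma_diffs_def)
next
  case (Cons p K)
  then have "A.sigma_diffs (p # K) = (sigma A (fst p) \<inter> (Xsp A - sigma A (snd p))) \<union> A.sigma_diffs K"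
    using A.sigma_subset by (auto simp: A.sigma_diffs_def)
  then show ?case
    using Cons by (auto intro!: represents_Un represents_Int represents_compl represents_sigma)
qed

lemma represents_clopen: "U \<in> clopens A \<Longrightarrow> represents U (extension U)"
  using represents_f_diffs extension_eq A.clopen_iff_sigma_diffs by metis

lemma extension_closed: "U \<in> clopens A \<Longrightarrow> extension U \<in> tcar B"
  using represents_clopen represents_def by blast

lemma extension_sigma: "a \<in> wcar A \<Longrightarrow> extension (sigma A a) = f a"
  by (simp add: extension_eq represents_sigma)

lemma
  assumes "U \<in> clopens A" "V \<in> clopens A"
  shows extension_Int: "extension (U \<inter> V) = tmeet B (extension U) (extension V)"
    and extension_Un: "extension (U \<union> V) = tjoin B (extension U) (extension V)"
  using assms by (simp_all add: extension_eq represents_Int represents_Un represents_clopen)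

lemma extension_compl: "U \<in> clopens A \<Longrightarrow> extension (Xsp A - U) = tneg B (extension U)"
  by (simp add: extension_eq represents_compl represents_clopen)

definition f_codiffs :: "('a \<times> 'a) list \<Rightarrow> 'b" where
  "f_codiffs K = foldr (tmeet B) (map (\<lambda>(a, b). tjoin B (tneg B (f a)) (f b)) K) (ttop B)"

lemma f_codiffs_simps [simp]: "f_codiffs [] = ttop B"
  "f_codiffs (p # K) = tmeet B (tjoin B (tneg B (f (fst p))) (f (snd p))) (f_codiffs K)"
  unfolding f_codiffs_def by (simp_all add: case_prod_beta)

lemma f_diffs_closed [simp]: "set K \<subseteq> wcar A \<times> wcar A \<Longrightarrow> f_diffs K \<in> tcar B"
  and f_codiffs_closed [simp]: "set K \<subseteq> wcar A \<times> wcar A \<Longrightarrow> f_codiffs K \<in> tcar B"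
  by (induction K) auto

lemma represents_f_codiffs:
  "set K \<subseteq> wcar A \<times> wcar A \<Longrightarrow> represents (Xsp A - A.sigma_diffs K) (f_codiffs K)"
proof (induction K)
  case Nil
  then show ?case using represents_Xsp by (simp add: A.sigma_diffs_def)
next
  case (Cons p K)
  then have "Xsp A - A.sigma_diffs (p # K) =
      ((Xsp A - sigma A (fst p)) \<union> sigma A (snd p)) \<inter> (Xsp A - A.sigma_diffs K)"
    using A.sigma_subset by (auto simp: A.sigma_diffs_def)
  then show ?case
    using Cons by (auto intro!: represents_Un represents_Int represents_compl represents_sigma)
qed

lemma G_f_codiffs: "set K \<subseteq> wcar A \<times> wcar A \<Longrightarrow> tG B (f_codiffs K) = f (A.imps K)"
  by (induction K) (auto simp: B.G_meet hom_meet hom_imp)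

lemma P_f_diffs: "set K \<subseteq> wcar A \<times> wcar A \<Longrightarrow> tP B (f_diffs K) = f (A.coimps K)"
  by (induction K) (auto simp: B.P_join hom_join hom_coimp)

lemma extension_GA: "U \<in> clopens A \<Longrightarrow> extension (GA A U) = tG B (extension U)"
proof (elim A.clopen_eq_compl_sigma_diffs)
  fix K assume K: "set K \<subseteq> wcar A \<times> wcar A" and U: "U = Xsp A - A.sigma_diffs K"
  show ?thesis
    unfolding U A.GA_compl_sigma_diffs [OF K]
    using K by (simp add: extension_sigma extension_eq [OF represents_f_codiffs] G_f_codiffs)
qed

lemma extension_HA: "U \<in> clopens A \<Longrightarrow> extension (HA A U) = tH B (extension U)"
proof (elim A.clopen_eq_compl_sigma_diffs)
  fix K assume K: "set K \<subseteq> wcar A \<times> wcar A" and U: "U = Xsp A - A.sigma_diffs K"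
  have "Xsp A - (Xsp A - A.sigma_diffs K) = A.sigma_diffs K"
    using A.clopen_subset [OF A.clopen_sigma_diffs [OF K]] by blast
  then have "tneg B (f_codiffs K) = f_diffs K"
    using represents_compl [OF represents_f_codiffs [OF K]] represents_f_diffs [OF K] represents_unique by simp
  then show ?thesis
    unfolding U A.HA_compl_sigma_diffs [OF K]
    using K by (simp add: extension_compl A.clopen_sigma extension_sigma B.H_eq
        extension_eq [OF represents_f_codiffs] P_f_diffs)
qed

lemma tba_hom_extension: "tba_hom (Tfun A) B extension"
  unfolding tba_hom_def using extension_closed
  by (simp add: Tfun_def extension_Int extension_Un extension_compl extension_GA extension_HA
      A.GA_clopen A.HA_clopen extension_eq represents_empty represents_Xsp)

lemma extension_unique:
  assumes g: "tba_hom (Tfun A) B g" and g_sigma: "\<forall>a\<in>wcar A. g (sigma A a) = f a"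
    and U: "U \<in> tcar (Tfun A)"
  shows "g U = extension U"
proof -
  have g_Int: "\<And>U V. U \<in> clopens A \<Longrightarrow> V \<in> clopens A \<Longrightarrow> g (U \<inter> V) = tmeet B (g U) (g V)"
    and g_Un: "\<And>U V. U \<in> clopens A \<Longrightarrow> V \<in> clopens A \<Longrightarrow> g (U \<union> V) = tjoin B (g U) (g V)"
    and g_compl: "\<And>U. U \<in> clopens A \<Longrightarrow> g (Xsp A - U) = tneg B (g U)"
    and g_empty: "g {} = tbot B"
    using g unfolding tba_hom_def Tfun_def by simp_all
  have "g (A.sigma_diffs K) = f_diffs K" if "set K \<subseteq> wcar A \<times> wcar A" for K
    using that
  proof (induction K)
    case Nil
    then show ?case using g_empty by (simp add: A.sigma_diffs_def)
  next
    case (Cons p K)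
    then have p: "fst p \<in> wcar A" "snd p \<in> wcar A" and K: "set K \<subseteq> wcar A \<times> wcar A" by auto
    have "A.sigma_diffs (p # K) = (sigma A (fst p) \<inter> (Xsp A - sigma A (snd p))) \<union> A.sigma_diffs K"
      using A.sigma_subset by (auto simp: A.sigma_diffs_def)
    then show ?case
      using Cons.IH [OF K] p K g_sigma
      by (simp add: g_Un g_Int g_compl A.clopen_sigma A.clopen_compl A.clopen_Int A.clopen_sigma_diffs)
  qed
  moreover obtain K where "set K \<subseteq> wcar A \<times> wcar A" "U = A.sigma_diffs K"
    using U A.clopen_iff_sigma_diffs by (auto simp: Tfun_def)
  ultimately show ?thesis
    using represents_f_diffs extension_eq by metis
qed

end

lemma T_object: "whb_algebra A \<Longrightarrow> tense_algebra (Tfun A) \<and> whb_hom A (Mfun (Tfun A)) (sigma A)"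
  by (simp add: whb.tense_algebra_Tfun whb.whb_hom_sigma whb.intro)

lemma M_object: "tense_algebra B \<Longrightarrow> whb_algebra (Mfun B)"
  by (rule tense.whb_algebra_Mfun [OF tense.intro])

lemma whb_morphismI: "whb_algebra A \<Longrightarrow> whb_algebra A' \<Longrightarrow> whb_hom A A' h \<Longrightarrow> whb_morphism A A' h"
  by (simp add: whb_morphism_def whb_morphism_axioms_def whb_def)

lemma T_morphism:
  assumes "whb_algebra A" "whb_algebra A'" "whb_hom A A' h"
  shows "tba_hom (Tfun A) (Tfun A') (Tmor A A' h) \<and> (\<forall>a\<in>wcar A. Tmor A A' h (sigma A a) = sigma A' (h a))"
proof -
  interpret whb_morphism A A' h using assms by (rule whb_morphismI)
  show ?thesis by (simp add: tba_hom_Tmor Tmor_sigma)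
qed

lemma T_preserves_injective:
  assumes "whb_algebra A" "whb_algebra A'" "whb_hom A A' h" "inj_on h (wcar A)"
  shows "inj_on (Tmor A A' h) (tcar (Tfun A))"
proof -
  interpret whb_morphism A A' h using assms(1-3) by (rule whb_morphismI)
  show ?thesis using assms(4) by (rule inj_on_Tmor)
qed

lemma T_faithful:
  assumes "whb_algebra A" "whb_algebra A'" "whb_hom A A' h1" "whb_hom A A' h2"
    and eq: "\<forall>U\<in>tcar (Tfun A). Tmor A A' h1 U = Tmor A A' h2 U"
  shows "\<forall>a\<in>wcar A. h1 a = h2 a"
proof
  fix a assume a: "a \<in> wcar A"
  interpret h1: whb_morphism A A' h1 using assms(1-3) by (rule whb_morphismI)
  interpret h2: whb_morphism A A' h2 using assms(1,2,4) by (rule whb_morphismI)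
  have "sigma A' (h1 a) = sigma A' (h2 a)"
    using eq a h1.A.clopen_sigma h1.Tmor_sigma h2.Tmor_sigma by (simp add: Tfun_def)
  then show "h1 a = h2 a" using a h1.A'.sigma_inj by simp
qed

lemma T_universal:
  assumes "whb_algebra A" "tense_algebra B" "whb_hom A (Mfun B) f"
  shows "\<exists>g. tba_hom (Tfun A) B g \<and> (\<forall>a\<in>wcar A. g (sigma A a) = f a) \<and>
            (\<forall>g'. tba_hom (Tfun A) B g' \<and> (\<forall>a\<in>wcar A. g' (sigma A a) = f a) \<longrightarrow>
                  (\<forall>U\<in>tcar (Tfun A). g' U = g U))"
proof -
  interpret whb_to_tense A B f
    using assms by (simp add: whb_to_tense_def whb_to_tense_axioms_def whb_def tense_def)
  show ?thesis using tba_hom_extension extension_sigma extension_unique by blast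
qed

theorem theorem6p3:
  shows
  "(\<forall>A :: 'a whb. whb_algebra A \<longrightarrow>
       tense_algebra (Tfun A) \<and> whb_hom A (Mfun (Tfun A)) (sigma A))
   \<and> (\<forall>B :: 'b tba. tense_algebra B \<longrightarrow> whb_algebra (Mfun B))
   \<and> (\<forall>(A :: 'a whb) (A' :: 'c whb) h. whb_algebra A \<and> whb_algebra A' \<and> whb_hom A A' h \<longrightarrow>
       tba_hom (Tfun A) (Tfun A') (Tmor A A' h) \<and>
       (\<forall>a\<in>wcar A. Tmor A A' h (sigma A a) = sigma A' (h a)))
   \<and> (\<forall>(A :: 'a whb) (B :: 'b tba) f.
       whb_algebra A \<and> tense_algebra B \<and> whb_hom A (Mfun B) f \<longrightarrow>
       (\<exists>g. tba_hom (Tfun A) B g \<and> (\<forall>a\<in>wcar A. g (sigma A a) = f a) \<and>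
            (\<forall>g'. tba_hom (Tfun A) B g' \<and> (\<forall>a\<in>wcar A. g' (sigma A a) = f a) \<longrightarrow>
                  (\<forall>U\<in>tcar (Tfun A). g' U = g U))))
   \<and> (\<forall>(A :: 'a whb) (A' :: 'c whb) h.
       whb_algebra A \<and> whb_algebra A' \<and> whb_hom A A' h \<and> inj_on h (wcar A) \<longrightarrow>
       inj_on (Tmor A A' h) (tcar (Tfun A)))
   \<and> (\<forall>(A :: 'a whb) (A' :: 'c whb) h1 h2.
       whb_algebra A \<and> whb_algebra A' \<and> whb_hom A A' h1 \<and> whb_hom A A' h2 \<and>
       (\<forall>U\<in>tcar (Tfun A). Tmor A A' h1 U = Tmor A A' h2 U) \<longrightarrow>
       (\<forall>a\<in>wcar A. h1 a = h2 a))
   \<and> (\<forall>(B :: 'b tba) (B' :: 'd tba) f.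
       tense_algebra B \<and> tense_algebra B' \<and> whb_hom (Mfun B) (Mfun B') f \<longrightarrow>
       tba_hom B B' f)
   \<and> (\<forall>(B :: 'b tba) (B' :: 'd tba) g1 g2.
       tense_algebra B \<and> tense_algebra B' \<and> tba_hom B B' g1 \<and> tba_hom B B' g2 \<and>
       (\<forall>x\<in>wcar (Mfun B). g1 x = g2 x) \<longrightarrow>
       (\<forall>x\<in>tcar B. g1 x = g2 x))"
proof (intro conjI allI impI; (elim conjE)?)
qed (rule T_object [THEN conjunct1] T_object [THEN conjunct2] M_object T_morphism [THEN conjunct1]
    T_morphism [THEN conjunct2] T_universal T_preserves_injective T_faithful M_full; assumption | simp)+

end
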